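(* Let $\vec p$ be a no-signalling box with inputs $x,y$ and outputs $a,b$, and let $\tau$ be a density operator on $\mathcal{H}_C\otimes\mathcal{H}_D$ (Alice holds $C$, Bob holds $D$). Suppose Alice, on input $x'$, applies to $C$ an instrument $\{\Lambda_{x|x'}\}_x$ (completely positive maps with $\sum_x\Lambda_{x|x'}$ trace preserving), feeds $x$ into the box, obtains $a$, and then measures $C$ with a POVM $\{M^{(2)}_{a'|a,x,x'}\}_{a'}$ producing $a'$; Bob similarly uses an instrument $\{\Gamma_{y|y'}\}_y$ on $D$ and POVMs $\{N^{(2)}_{b'|b,y,y'}\}_{b'}$. The resulting box is $$p'(a',b'|x',y')=\sum_{a,b,x,y}\mathrm{Tr}\Big(M^{(2)}_{a'|a,x,x'}\otimes N^{(2)}_{b'|b,y,y'}\,(\Lambda_{x|x'}\otimes\Gamma_{y|y'})[\tau]\Big)\,p(a,b|x,y).$$ Then: if $\tau$ is separable, $r_{\mathcal{L}}(\vec p')\le r_{\mathcal{L}}(\vec p)$ (equivalently $r_{\mathbb{S}}(\vec p')\le r_{\mathbb{S}}(\vec p)$); and for any density operator $\tau$, $r_{\mathcal{Q}}(\vec p')\le r_{\mathcal{Q}}(\vec p)$ (equivalently $r_{\mathbb{D}}(\vec p')\le r_{\mathbb{D}}(\vec p)$). Moreover, if $O\rightarrow\vec p$ then $O\otimes\tau\rightarrow\vec p'$ with respect to the cut $AC:BD$.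
   Context: Boxes $\vec p=(p(a,b|x,y))$ over finite alphabets are nonnegative with $\sum_{a,b}p(a,b|x,y)=1$; $\mathcal{L}$ is the set of local boxes $\sum_iq_ip_A^i(a|x)p_B^i(b|y)$; $\mathcal{Q}$ the set of boxes $\mathrm{Tr}(M_{a|x}\otimes N_{b|y}\rho)$ for density operators $\rho$ on finite-dimensional bipartite spaces and local POVMs. A pseudo-state is a Hermitian unit-trace operator; $O\rightarrow\vec p$ means $\vec p$ arises from $O$ by local POVMs via $p=\mathrm{Tr}(M_{a|x}\otimes N_{b|y}O)$. A state is separable if it is a convex combination of product states $\sigma_A\otimes\sigma_B$. For a set $S$, $r_S(v):=\inf\{t\ge0:\exists w\in S,\ (v+tw)/(1+t)\in S\}$; $r_{\mathcal{L}},r_{\mathcal{Q}}$ are robustnesses of boxes w.r.t. $\mathcal{L},\mathcal{Q}$; for pseudo-states $r_{\mathbb{S}}(O)$, $r_{\mathbb{D}}(O)$ are robustnesses w.r.t. separable states and density operators; $r_{\mathbb{S}}(\vec p):=\inf_{O\rightarrow\vec p}r_{\mathbb{S}}(O)$, $r_{\mathbb{D}}(\vec p):=\inf_{O\rightarrow\vec p}r_{\mathbb{D}}(O)$. *)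

theory Defs
  imports "Jordan_Normal_Form.Matrix" "HOL-Library.Extended_Real"
begin

text \<open>An operator on a d-dimensional Hilbert space is a complex d x d matrix.
  A bipartite space H_1 (dim d1) tensor H_2 (dim d2) is identified with
  complex^(d1*d2), basis index (i,k) corresponding to i*d2+k.\<close>

definition mtrace :: "complex mat \<Rightarrow> complex" where
  "mtrace A = (\<Sum>i<dim_row A. A $$ (i,i))"

definition kron :: "complex mat \<Rightarrow> complex mat \<Rightarrow> complex mat" where
  "kron A B = mat (dim_row A * dim_row B) (dim_col A * dim_col B)
     (\<lambda>(r,c). A $$ (r div dim_row B, c div dim_col B) * B $$ (r mod dim_row B, c mod dim_col B))"

definition hermitian_op :: "nat \<Rightarrow> complex mat \<Rightarrow> bool" where
  "hermitian_op d A \<longleftrightarrow> A \<in> carrier_mat d d \<and>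
     (\<forall>i<d. \<forall>j<d. A $$ (i,j) = cnj (A $$ (j,i)))"

definition psd_op :: "nat \<Rightarrow> complex mat \<Rightarrow> bool" where
  "psd_op d A \<longleftrightarrow> A \<in> carrier_mat d d \<and>
     (\<forall>v \<in> carrier_vec d. let z = (\<Sum>i<d. cnj (v $ i) * (A *\<^sub>v v) $ i) in Im z = 0 \<and> Re z \<ge> 0)"

definition density_op :: "nat \<Rightarrow> complex mat \<Rightarrow> bool" where
  "density_op d \<rho> \<longleftrightarrow> psd_op d \<rho> \<and> mtrace \<rho> = 1"

definition pseudo_state :: "nat \<Rightarrow> complex mat \<Rightarrow> bool" where
  "pseudo_state d Op \<longleftrightarrow> hermitian_op d Op \<and> mtrace Op = 1"

definition separable :: "nat \<Rightarrow> nat \<Rightarrow> complex mat \<Rightarrow> bool" where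
  "separable dA dB \<rho> \<longleftrightarrow> (\<exists>(n::nat) (q::nat \<Rightarrow> real) \<sigma>A \<sigma>B.
      (\<forall>i<n. q i \<ge> 0 \<and> density_op dA (\<sigma>A i) \<and> density_op dB (\<sigma>B i)) \<and>
      (\<Sum>i<n. q i) = 1 \<and>
      \<rho> = mat (dA*dB) (dA*dB)
             (\<lambda>(r,c). \<Sum>i<n. complex_of_real (q i) * kron (\<sigma>A i) (\<sigma>B i) $$ (r,c)))"

definition povm :: "nat \<Rightarrow> nat \<Rightarrow> (nat \<Rightarrow> complex mat) \<Rightarrow> bool" where
  "povm d n M \<longleftrightarrow> (\<forall>a<n. psd_op d (M a)) \<and>
     (\<forall>r<d. \<forall>c<d. (\<Sum>a<n. M a $$ (r,c)) = (1\<^sub>m d :: complex mat) $$ (r,c))"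

definition eunit :: "nat \<Rightarrow> nat \<Rightarrow> nat \<Rightarrow> complex mat" where
  "eunit d i j = mat d d (\<lambda>(r,c). if r = i \<and> c = j then 1 else 0)"

definition lin_map :: "nat \<Rightarrow> nat \<Rightarrow> (complex mat \<Rightarrow> complex mat) \<Rightarrow> bool" where
  "lin_map d d' L \<longleftrightarrow>
     (\<forall>X \<in> carrier_mat d d. L X \<in> carrier_mat d' d') \<and>
     (\<forall>X \<in> carrier_mat d d. \<forall>Y \<in> carrier_mat d d. L (X + Y) = L X + L Y) \<and>
     (\<forall>X \<in> carrier_mat d d. \<forall>z. L (z \<cdot>\<^sub>m X) = z \<cdot>\<^sub>m L X)"

text \<open>(L1 tensor L2)[X] for linear maps L1 : d1 -> d1', L2 : d2 -> d2', defined by linear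
  extension from matrix units.\<close>
definition map_tensor :: "nat \<Rightarrow> nat \<Rightarrow> nat \<Rightarrow> nat \<Rightarrow>
    (complex mat \<Rightarrow> complex mat) \<Rightarrow> (complex mat \<Rightarrow> complex mat) \<Rightarrow> complex mat \<Rightarrow> complex mat" where
  "map_tensor d1 d2 d1' d2' L1 L2 X = mat (d1'*d2') (d1'*d2') (\<lambda>(r,c).
     \<Sum>i<d1. \<Sum>j<d1. \<Sum>k<d2. \<Sum>l<d2.
       X $$ (i*d2+k, j*d2+l) * (L1 (eunit d1 i j)) $$ (r div d2', c div d2')
                             * (L2 (eunit d2 k l)) $$ (r mod d2', c mod d2'))"

definition cp_map :: "nat \<Rightarrow> nat \<Rightarrow> (complex mat \<Rightarrow> complex mat) \<Rightarrow> bool" where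
  "cp_map d d' L \<longleftrightarrow> lin_map d d' L \<and>
     (\<forall>k X. psd_op (k*d) X \<longrightarrow> psd_op (k*d') (map_tensor k d k d' (\<lambda>Y. Y) L X))"

definition instrument :: "nat \<Rightarrow> nat \<Rightarrow> (nat \<Rightarrow> complex mat \<Rightarrow> complex mat) \<Rightarrow> bool" where
  "instrument d n L \<longleftrightarrow> (\<forall>x<n. cp_map d d (L x)) \<and>
     (\<forall>X \<in> carrier_mat d d. (\<Sum>x<n. mtrace (L x X)) = mtrace X)"

text \<open>A box p(a,b|x,y) is a function p a b x y, with outputs a < nA, b < nB and
  inputs x < mX, y < mY; only values on this domain matter.\<close>

definition is_box :: "nat \<Rightarrow> nat \<Rightarrow> nat \<Rightarrow> nat \<Rightarrow> (nat \<Rightarrow> nat \<Rightarrow> nat \<Rightarrow> nat \<Rightarrow> real) \<Rightarrow> bool" where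
  "is_box nA nB mX mY p \<longleftrightarrow>
     (\<forall>a<nA. \<forall>b<nB. \<forall>x<mX. \<forall>y<mY. p a b x y \<ge> 0) \<and>
     (\<forall>x<mX. \<forall>y<mY. (\<Sum>a<nA. \<Sum>b<nB. p a b x y) = 1)"

definition no_signalling :: "nat \<Rightarrow> nat \<Rightarrow> nat \<Rightarrow> nat \<Rightarrow> (nat \<Rightarrow> nat \<Rightarrow> nat \<Rightarrow> nat \<Rightarrow> real) \<Rightarrow> bool" where
  "no_signalling nA nB mX mY p \<longleftrightarrow> is_box nA nB mX mY p \<and>
     (\<forall>a<nA. \<forall>x<mX. \<forall>y<mY. \<forall>y'<mY. (\<Sum>b<nB. p a b x y) = (\<Sum>b<nB. p a b x y')) \<and>
     (\<forall>b<nB. \<forall>y<mY. \<forall>x<mX. \<forall>x'<mX. (\<Sum>a<nA. p a b x y) = (\<Sum>a<nA. p a b x' y))"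

definition local_box :: "nat \<Rightarrow> nat \<Rightarrow> nat \<Rightarrow> nat \<Rightarrow> (nat \<Rightarrow> nat \<Rightarrow> nat \<Rightarrow> nat \<Rightarrow> real) \<Rightarrow> bool" where
  "local_box nA nB mX mY p \<longleftrightarrow>
     (\<exists>(n::nat) (q::nat \<Rightarrow> real) (pA::nat \<Rightarrow> nat \<Rightarrow> nat \<Rightarrow> real) (pB::nat \<Rightarrow> nat \<Rightarrow> nat \<Rightarrow> real).
        (\<forall>i<n. q i \<ge> 0) \<and> (\<Sum>i<n. q i) = 1 \<and>
        (\<forall>i<n. \<forall>x<mX. (\<forall>a<nA. pA i a x \<ge> 0) \<and> (\<Sum>a<nA. pA i a x) = 1) \<and>
        (\<forall>i<n. \<forall>y<mY. (\<forall>b<nB. pB i b y \<ge> 0) \<and> (\<Sum>b<nB. pB i b y) = 1) \<and>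
        (\<forall>a<nA. \<forall>b<nB. \<forall>x<mX. \<forall>y<mY. p a b x y = (\<Sum>i<n. q i * pA i a x * pB i b y)))"

text \<open>Op -> p: p arises from the operator Op on H_A (dim dA) tensor H_B (dim dB) by local POVMs.\<close>
definition produces :: "nat \<Rightarrow> nat \<Rightarrow> nat \<Rightarrow> nat \<Rightarrow> nat \<Rightarrow> nat \<Rightarrow> complex mat
    \<Rightarrow> (nat \<Rightarrow> nat \<Rightarrow> nat \<Rightarrow> nat \<Rightarrow> real) \<Rightarrow> bool" where
  "produces nA nB mX mY dA dB Op p \<longleftrightarrow>
     (\<exists>(M::nat \<Rightarrow> nat \<Rightarrow> complex mat) (N::nat \<Rightarrow> nat \<Rightarrow> complex mat).
        (\<forall>x<mX. povm dA nA (M x)) \<and> (\<forall>y<mY. povm dB nB (N y)) \<and>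
        (\<forall>a<nA. \<forall>b<nB. \<forall>x<mX. \<forall>y<mY.
           complex_of_real (p a b x y) = mtrace (kron (M x a) (N y b) * Op)))"

definition quantum_box :: "nat \<Rightarrow> nat \<Rightarrow> nat \<Rightarrow> nat \<Rightarrow> (nat \<Rightarrow> nat \<Rightarrow> nat \<Rightarrow> nat \<Rightarrow> real) \<Rightarrow> bool" where
  "quantum_box nA nB mX mY p \<longleftrightarrow>
     (\<exists>dA dB \<rho>. density_op (dA*dB) \<rho> \<and> produces nA nB mX mY dA dB \<rho> p)"

text \<open>r_S(v) = inf {t >= 0 : exists w in S, (v + t w)/(1+t) in S}, valued in extended reals
  (inf of the empty set is +infinity).\<close>
definition box_robustness :: "((nat \<Rightarrow> nat \<Rightarrow> nat \<Rightarrow> nat \<Rightarrow> real) \<Rightarrow> bool) \<Rightarrow> nat \<Rightarrow> nat \<Rightarrow> nat \<Rightarrow> nat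
    \<Rightarrow> (nat \<Rightarrow> nat \<Rightarrow> nat \<Rightarrow> nat \<Rightarrow> real) \<Rightarrow> ereal" where
  "box_robustness S nA nB mX mY v = Inf (ereal ` {t. t \<ge> 0 \<and>
     (\<exists>w u. S w \<and> S u \<and>
        (\<forall>a<nA. \<forall>b<nB. \<forall>x<mX. \<forall>y<mY. (v a b x y + t * w a b x y) / (1 + t) = u a b x y))})"

definition r_L where "r_L nA nB mX mY = box_robustness (local_box nA nB mX mY) nA nB mX mY"
definition r_Q where "r_Q nA nB mX mY = box_robustness (quantum_box nA nB mX mY) nA nB mX mY"

definition op_robustness :: "(complex mat \<Rightarrow> bool) \<Rightarrow> complex mat \<Rightarrow> ereal" where
  "op_robustness S Op = Inf (ereal ` {t. t \<ge> 0 \<and>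
     (\<exists>W. S W \<and> S (complex_of_real (1 / (1 + t)) \<cdot>\<^sub>m (Op + complex_of_real t \<cdot>\<^sub>m W)))})"

definition r_S_op where "r_S_op dA dB Op = op_robustness (separable dA dB) Op"
definition r_D_op where "r_D_op dA dB Op = op_robustness (density_op (dA*dB)) Op"

definition r_S_box :: "nat \<Rightarrow> nat \<Rightarrow> nat \<Rightarrow> nat \<Rightarrow> (nat \<Rightarrow> nat \<Rightarrow> nat \<Rightarrow> nat \<Rightarrow> real) \<Rightarrow> ereal" where
  "r_S_box nA nB mX mY p = Inf {r_S_op dA dB Op | dA dB Op.
     pseudo_state (dA*dB) Op \<and> produces nA nB mX mY dA dB Op p}"

definition r_D_box :: "nat \<Rightarrow> nat \<Rightarrow> nat \<Rightarrow> nat \<Rightarrow> (nat \<Rightarrow> nat \<Rightarrow> nat \<Rightarrow> nat \<Rightarrow> real) \<Rightarrow> ereal" where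
  "r_D_box nA nB mX mY p = Inf {r_D_op dA dB Op | dA dB Op.
     pseudo_state (dA*dB) Op \<and> produces nA nB mX mY dA dB Op p}"

text \<open>Given Op on A tensor B and tau on C tensor D, the operator Op tensor tau regarded as an
  operator on (A tensor C) tensor (B tensor D); basis index ((a*dC+c)*(dB*dD) + (b*dD+d)).\<close>
definition cut_tensor :: "nat \<Rightarrow> nat \<Rightarrow> nat \<Rightarrow> nat \<Rightarrow> complex mat \<Rightarrow> complex mat \<Rightarrow> complex mat" where
  "cut_tensor dA dB dC dD Op \<tau> = mat (dA*dC*(dB*dD)) (dA*dC*(dB*dD)) (\<lambda>(r,s).
     let rAC = r div (dB*dD); rBD = r mod (dB*dD); sAC = s div (dB*dD); sBD = s mod (dB*dD) in
     Op $$ ((rAC div dC)*dB + rBD div dD, (sAC div dC)*dB + sBD div dD) *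
     \<tau> $$ ((rAC mod dC)*dD + rBD mod dD, (sAC mod dC)*dD + sBD mod dD))"

end

theory Submission
  imports Defs "HOL-Library.Complex_Order"
begin

text \<open>The wiring acts on boxes by the linear map \<open>p \<mapsto> p'\<close> with kernel
  \<open>K(a'b'|x'y'; abxy) = tr ((M2 \<otimes> N2) (\<Lambda> \<otimes> \<Gamma>)[\<tau>])\<close>. In the Heisenberg picture this kernel
  is \<open>tr ((\<Lambda>\<^sup>*(M2) \<otimes> \<Gamma>\<^sup>*(N2)) \<tau>)\<close>, so if the operator \<open>O\<close> yields \<open>p\<close> with local
  POVMs \<open>M, N\<close>, then \<open>O \<otimes> \<tau>\<close> yields \<open>p'\<close> with the POVMs \<open>\<Sum>\<^sub>a\<^sub>,\<^sub>x M\<^sub>a\<^sub>|\<^sub>x \<otimes> \<Lambda>\<^sub>x\<^sup>*(M2)\<close>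
  and \<open>\<Sum>\<^sub>b\<^sub>,\<^sub>y N\<^sub>b\<^sub>|\<^sub>y \<otimes> \<Gamma>\<^sub>y\<^sup>*(N2)\<close>; these are POVMs because the duals of completely
  positive maps are positive and the duals of an instrument sum to a unital map. Hence quantum boxes
  are mapped to quantum boxes, and when \<open>\<tau>\<close> is separable the kernel splits into local response
  functions, so local boxes are mapped to local boxes. A witness \<open>p + t w = (1 + t) u\<close> of a
  robustness value is carried along by the linear map on boxes, and likewise by the affine map
  \<open>O \<mapsto> O \<otimes> \<tau>\<close> on operators, which preserves separable and density operators.\<close>

section \<open>Positive semidefinite forms\<close>

text \<open>A matrix of size \<open>n\<close> is handled through its entry function on \<open>{..<n} \<times> {..<n}\<close>, which
  keeps carrier and dimension bookkeeping out of the positivity arguments.\<close>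

definition quad_form :: "nat \<Rightarrow> (nat \<Rightarrow> nat \<Rightarrow> complex) \<Rightarrow> (nat \<Rightarrow> complex) \<Rightarrow> complex" where
  "quad_form n f v = (\<Sum>i<n. \<Sum>j<n. cnj (v i) * f i j * v j)"

definition psd_form :: "nat \<Rightarrow> (nat \<Rightarrow> nat \<Rightarrow> complex) \<Rightarrow> bool" where
  "psd_form n f \<longleftrightarrow> (\<forall>v. 0 \<le> quad_form n f v)"

lemma complex_nonneg_of_real_Re: "0 \<le> (z::complex) \<Longrightarrow> complex_of_real (Re z) = z"
  by (simp add: nonnegative_complex_is_real)

lemma cnj_mult_self_nonneg: "0 \<le> cnj z * (z::complex)"
  by (simp add: less_eq_complex_def)

lemma quad_form_cong:
  "(\<And>i. i < n \<Longrightarrow> v i = v' i) \<Longrightarrow> (\<And>i j. i < n \<Longrightarrow> j < n \<Longrightarrow> f i j = f' i j)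
    \<Longrightarrow> quad_form n f v = quad_form n f' v'"
  unfolding quad_form_def by (intro sum.cong) auto

lemma psd_form_cong:
  "(\<And>i j. i < n \<Longrightarrow> j < n \<Longrightarrow> f i j = f' i j) \<Longrightarrow> psd_form n f \<longleftrightarrow> psd_form n f'"
  unfolding psd_form_def using quad_form_cong[of n _ _ f f'] by metis

lemma psd_form_nonneg: "psd_form n f \<Longrightarrow> 0 \<le> quad_form n f v"
  unfolding psd_form_def by blast

lemma quad_form_supported:
  assumes "S \<subseteq> {..<n}" and "\<And>t. t \<notin> S \<Longrightarrow> v t = 0"
  shows "quad_form n f v = (\<Sum>i\<in>S. \<Sum>j\<in>S. cnj (v i) * f i j * v j)"
proof -
  have "quad_form n f v = (\<Sum>i\<in>S. \<Sum>j<n. cnj (v i) * f i j * v j)"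
    unfolding quad_form_def using assms by (intro sum.mono_neutral_right) (auto simp del: lessThan_iff)
  also have "\<dots> = (\<Sum>i\<in>S. \<Sum>j\<in>S. cnj (v i) * f i j * v j)"
    using assms by (intro sum.cong refl sum.mono_neutral_right) (auto simp del: lessThan_iff)
  finally show ?thesis .
qed

lemma quad_form_pair:
  assumes "i < n" "k < n" "i \<noteq> k"
  shows "quad_form n f (\<lambda>t. if t = i then a else if t = k then b else 0) =
    cnj a * f i i * a + cnj a * f i k * b + cnj b * f k i * a + cnj b * f k k * b"
  using assms by (subst quad_form_supported[of "{i, k}"]) (auto simp: algebra_simps)

lemma psd_form_diag_nonneg:
  assumes "psd_form n f" "i < n"
  shows "0 \<le> f i i"
proof -
  have "quad_form n f (\<lambda>t. if t = i then 1 else 0) = f i i"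
    using assms(2) by (subst quad_form_supported[of "{i}"]) (auto simp del: lessThan_iff)
  then show ?thesis using psd_form_nonneg[OF assms(1)] by metis
qed

lemma psd_form_pair_nonneg:
  assumes "psd_form n f" "i < n" "k < n" "i \<noteq> k"
  shows "0 \<le> cnj a * f i i * a + cnj a * f i k * b + cnj b * f k i * a + cnj b * f k k * b"
  using psd_form_nonneg[OF assms(1)] unfolding quad_form_pair[OF assms(2-4), symmetric] .

lemma psd_form_hermitian:
  assumes f: "psd_form n f" and i: "i < n" and k: "k < n"
  shows "f i k = cnj (f k i)"
proof (cases "i = k")
  case True
  then show ?thesis using psd_form_diag_nonneg[OF f i] by (auto simp: less_eq_complex_def complex_eq_iff)
next
  case False
  have "Im (f i i) = 0" "Im (f k k) = 0"
    using psd_form_diag_nonneg f i k by (auto simp: less_eq_complex_def)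
  moreover have "Im (f i i + f i k + f k i + f k k) = 0"
    using psd_form_pair_nonneg[OF f i k False, of 1 1] by (simp add: less_eq_complex_def)
  moreover have "Im (f i i + f i k * \<i> - \<i> * f k i - \<i> * f k k * \<i>) = 0"
    using psd_form_pair_nonneg[OF f i k False, of 1 \<i>] by (simp add: less_eq_complex_def)
  ultimately show ?thesis by (simp add: complex_eq_iff)
qed

lemma psd_form_zero_diag_row:
  assumes f: "psd_form n f" and i: "i < n" and k: "k < n" and z: "f k k = 0"
  shows "f i k = 0"
proof (cases "i = k")
  case True
  then show ?thesis using z by simp
next
  case False
  define r where "r = Re (f i i)"
  have r: "f i i = complex_of_real r" "r \<ge> 0"
    using psd_form_diag_nonneg[OF f i] complex_nonneg_of_real_Re
    by (auto simp: r_def less_eq_complex_def)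
  define t :: real where "t = 1 / (r + 1)"
  have t: "t > 0" "t * r < 1" using r(2) by (auto simp: t_def field_simps)
  define x where "x = Re (f i k)"
  define y where "y = Im (f i k)"
  \<comment> \<open>Test the form on \<open>\<alpha> e\<^sub>i + e\<^sub>k\<close>: for small \<open>t\<close> the term linear in \<open>t\<close> dominates.\<close>
  define \<alpha> where "\<alpha> = - complex_of_real t * f i k"
  have "0 \<le> cnj \<alpha> * f i i * \<alpha> + cnj \<alpha> * f i k + f k i * \<alpha>"
    using psd_form_pair_nonneg[OF f i k False, of \<alpha> 1] z by simp
  hence "Re (cnj \<alpha> * f i i * \<alpha> + cnj \<alpha> * f i k + f k i * \<alpha>) \<ge> 0"
    by (simp add: less_eq_complex_def)
  hence "r * t * t * (x*x + y*y) - 2 * t * (x*x + y*y) \<ge> 0"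
    unfolding psd_form_hermitian[OF f k i] r \<alpha>_def x_def y_def by (simp add: algebra_simps)
  hence "(x*x + y*y) * (t * (2 - t * r)) \<le> 0" by (simp add: algebra_simps)
  moreover have "t * (2 - t * r) > 0" using t by simp
  ultimately have "x*x + y*y \<le> 0"
    using mult_le_cancel_right_pos[of "t * (2 - t * r)" "x*x + y*y" 0] by simp
  hence "x = 0" "y = 0" by (auto simp: sum_squares_le_zero_iff)
  thus ?thesis by (simp add: x_def y_def complex_eq_iff)
qed

lemma quad_form_Suc:
  "quad_form (Suc n) f v = quad_form n f v + (\<Sum>i<n. cnj (v i) * f i n) * v n
     + cnj (v n) * (\<Sum>j<n. f n j * v j) + cnj (v n) * f n n * v n"
  unfolding quad_form_def
  by (simp add: lessThan_Suc sum.distrib sum_distrib_left sum_distrib_right algebra_simps)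

lemma psd_form_Suc_restrict: "psd_form (Suc n) f \<Longrightarrow> psd_form n f"
  unfolding psd_form_def
proof
  fix v
  assume f: "\<forall>v. 0 \<le> quad_form (Suc n) f v"
  have "quad_form n f (\<lambda>t. if t < n then v t else 0) = quad_form n f v"
    by (rule quad_form_cong) auto
  hence "quad_form (Suc n) f (\<lambda>t. if t < n then v t else 0) = quad_form n f v"
    unfolding quad_form_Suc by simp
  moreover have "0 \<le> quad_form (Suc n) f (\<lambda>t. if t < n then v t else 0)" using f ..
  ultimately show "0 \<le> quad_form n f v" by simp
qed

lemma psd_form_schur_complement:
  assumes f: "psd_form (Suc n) f" and s: "f n n = complex_of_real s" "s > 0"
  shows "psd_form n (\<lambda>i j. f i j - f i n * f n j / complex_of_real s)"
  unfolding psd_form_def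
proof
  fix v
  define T where "T = (\<Sum>j<n. f n j * v j)"
  define V where "V t = (if t < n then v t else - T / complex_of_real s)" for t
  have col: "f i n = cnj (f n i)" if "i < n" for i
    using psd_form_hermitian[OF f, of i n] that by simp
  have row: "(\<Sum>i<n. cnj (v i) * f i n) = cnj T"
    unfolding T_def cnj_sum by (intro sum.cong) (auto simp: col mult.commute)
  have "quad_form n (\<lambda>i j. f i j - f i n * f n j / complex_of_real s) v
      = quad_form n f v - (\<Sum>i<n. \<Sum>j<n. cnj (v i) * f i n * (f n j * v j)) / complex_of_real s"
    unfolding quad_form_def by (simp add: algebra_simps sum_subtractf sum_divide_distrib)
  also have "\<dots> = quad_form n f v - cnj T * T / complex_of_real s"
    unfolding sum_product[symmetric] row T_def ..
  also have "\<dots> = quad_form (Suc n) f V"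
  proof -
    have "quad_form n f V = quad_form n f v" by (rule quad_form_cong) (auto simp: V_def)
    moreover have "(\<Sum>i<n. cnj (V i) * f i n) = cnj T" using row by (simp add: V_def)
    moreover have "(\<Sum>j<n. f n j * V j) = T" by (simp add: V_def T_def)
    ultimately show ?thesis
      unfolding quad_form_Suc using s by (simp add: V_def field_simps)
  qed
  finally show "0 \<le> quad_form n (\<lambda>i j. f i j - f i n * f n j / complex_of_real s) v"
    using psd_form_nonneg[OF f] by simp
qed

lemma psd_form_gram_extend:
  assumes f: "psd_form (Suc n) f" and s: "f n n = complex_of_real s" "s > 0"
    and w: "\<forall>i<n. \<forall>j<n. f i j - f i n * f n j / complex_of_real s = (\<Sum>m<n. w m i * cnj (w m j))"
  shows "\<exists>w'. \<forall>i<Suc n. \<forall>j<Suc n. f i j = (\<Sum>m<Suc n. w' m i * cnj (w' m j))"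
proof -
  have cnj_col: "cnj (f i n) = f n i" if "i < Suc n" for i
    using psd_form_hermitian[OF f, of i n] that by simp
  define sq where "sq = complex_of_real (sqrt s)"
  have sq: "sq \<noteq> 0" "sq * sq = complex_of_real s" "cnj sq = sq"
    using s(2) by (simp_all add: sq_def flip: of_real_mult)
  \<comment> \<open>The last Gram vector is the last column scaled by \<open>1 / sqrt (f n n)\<close>.\<close>
  define u where "u i = f i n / sq" for i
  have un: "u n = sq"
    unfolding u_def s(1) sq(2)[symmetric] using sq(1) by simp
  define w' where "w' m i = (if m < n then if i < n then w m i else 0 else u i)" for m i
  have "f i j = (\<Sum>m<Suc n. w' m i * cnj (w' m j))" if ij: "i < Suc n" "j < Suc n" for i j
  proof (cases "i < n \<and> j < n")
    case True
    have "u i * cnj (u j) = f i n * f n j / (sq * sq)"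
      using True cnj_col[of j] sq(3) by (simp add: u_def)
    then have "u i * cnj (u j) = f i n * f n j / complex_of_real s"
      by (simp only: sq(2))
    then show ?thesis using w True by (simp add: w'_def) (metis diff_add_cancel)
  next
    case False
    then have "i = n \<or> j = n" using ij by auto
    then have "f i j = u i * cnj (u j)"
    proof
      assume "i = n"
      then show ?thesis using sq cnj_col[OF ij(2)] s by (simp add: u_def)
    next
      assume "j = n"
      then show ?thesis using un sq by (simp add: u_def)
    qed
    then show ?thesis using False by (cases "i < n") (auto simp: w'_def)
  qed
  then show ?thesis by blast
qed

lemma psd_form_gram:
  "psd_form n f \<Longrightarrow> \<exists>w. \<forall>i<n. \<forall>j<n. f i j = (\<Sum>m<n. w m i * cnj (w m j))"
proof (induction n arbitrary: f)
  case 0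
  then show ?case by simp
next
  case (Suc n)
  note f = Suc.prems
  define s where "s = Re (f n n)"
  have s: "f n n = complex_of_real s" "s \<ge> 0"
    using psd_form_diag_nonneg[OF f, of n] complex_nonneg_of_real_Re
    by (auto simp: s_def less_eq_complex_def)
  show ?case
  proof (cases "s = 0")
    case True
    have "f i n = 0" if "i < Suc n" for i
      using psd_form_zero_diag_row[OF f that lessI] s True by simp
    moreover have "f n i = cnj (f i n)" if "i < Suc n" for i
      using psd_form_hermitian[OF f, of n i] that by simp
    ultimately have zero: "f i n = 0" "f n i = 0" if "i < Suc n" for i
      using that by simp_all
    obtain w where w: "\<forall>i<n. \<forall>j<n. f i j = (\<Sum>m<n. w m i * cnj (w m j))"
      using Suc.IH[OF psd_form_Suc_restrict[OF f]] by blast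
    define w' where "w' m i = (if m < n \<and> i < n then w m i else 0)" for m i
    have "f i j = (\<Sum>m<Suc n. w' m i * cnj (w' m j))" if "i < Suc n" "j < Suc n" for i j
      using that w zero by (cases "i < n \<and> j < n") (auto simp: w'_def less_Suc_eq)
    then show ?thesis by blast
  next
    case False
    with s have "s > 0" by simp
    with Suc.IH[OF psd_form_schur_complement[OF f s(1) this]] show ?thesis
      using psd_form_gram_extend[OF f s(1)] by blast
  qed
qed

lemma quad_form_sum: "quad_form n (\<lambda>i j. \<Sum>m\<in>S. G m i j) v = (\<Sum>m\<in>S. quad_form n (G m) v)"
proof -
  have "quad_form n (\<lambda>i j. \<Sum>m\<in>S. G m i j) v = (\<Sum>i<n. \<Sum>j<n. \<Sum>m\<in>S. cnj (v i) * G m i j * v j)"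
    unfolding quad_form_def by (simp only: sum_distrib_left sum_distrib_right)
  also have "\<dots> = (\<Sum>i<n. \<Sum>m\<in>S. \<Sum>j<n. cnj (v i) * G m i j * v j)"
    by (rule sum.cong[OF refl], rule sum.swap)
  also have "\<dots> = (\<Sum>m\<in>S. quad_form n (G m) v)"
    unfolding quad_form_def by (rule sum.swap)
  finally show ?thesis .
qed

lemma psd_form_sum: "(\<And>m. m \<in> S \<Longrightarrow> psd_form n (G m)) \<Longrightarrow> psd_form n (\<lambda>i j. \<Sum>m\<in>S. G m i j)"
  unfolding psd_form_def quad_form_sum by (simp add: sum_nonneg)

lemma psd_form_rank_one: "psd_form n (\<lambda>i j. w i * cnj (w j))"
proof -
  have eq: "quad_form n (\<lambda>i j. w i * cnj (w j)) v
      = cnj (\<Sum>j<n. cnj (w j) * v j) * (\<Sum>j<n. cnj (w j) * v j)" for v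
    unfolding quad_form_def cnj_sum sum_product by (simp add: mult_ac)
  show ?thesis unfolding psd_form_def eq by (intro allI cnj_mult_self_nonneg)
qed

lemma psd_form_trace_nonneg:
  assumes f: "psd_form n f" and g: "psd_form n g"
  shows "0 \<le> (\<Sum>i<n. \<Sum>j<n. f i j * g j i)"
proof -
  obtain w where w: "\<forall>i<n. \<forall>j<n. g i j = (\<Sum>m<n. w m i * cnj (w m j))"
    using psd_form_gram[OF g] by blast
  have "(\<Sum>i<n. \<Sum>j<n. f i j * g j i) = (\<Sum>i<n. \<Sum>j<n. \<Sum>m<n. cnj (w m i) * f i j * w m j)"
    using w by (intro sum.cong) (auto simp: sum_distrib_left mult_ac)
  also have "\<dots> = (\<Sum>i<n. \<Sum>m<n. \<Sum>j<n. cnj (w m i) * f i j * w m j)"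
    by (rule sum.cong[OF refl], rule sum.swap)
  also have "\<dots> = (\<Sum>m<n. quad_form n f (w m))"
    unfolding quad_form_def by (rule sum.swap)
  finally show ?thesis using psd_form_nonneg[OF f] by (simp add: sum_nonneg)
qed

lemma psd_form_schur_product:
  assumes f: "psd_form n f" and g: "psd_form n g"
  shows "psd_form n (\<lambda>i j. f i j * g i j)"
  unfolding psd_form_def
proof
  fix v
  obtain w where w: "\<forall>i<n. \<forall>j<n. g i j = (\<Sum>m<n. w m i * cnj (w m j))"
    using psd_form_gram[OF g] by blast
  have "quad_form n (\<lambda>i j. f i j * g i j) v = quad_form n (\<lambda>i j. \<Sum>m<n. f i j * (w m i * cnj (w m j))) v"
    using w by (intro quad_form_cong) (auto simp: sum_distrib_left)
  also have "\<dots> = (\<Sum>m<n. quad_form n f (\<lambda>i. v i * cnj (w m i)))"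
    unfolding quad_form_sum quad_form_def by (simp add: mult_ac)
  finally show "0 \<le> quad_form n (\<lambda>i j. f i j * g i j) v"
    using psd_form_nonneg[OF f] by (simp add: sum_nonneg)
qed

lemma psd_form_reindex:
  assumes f: "psd_form n f" and h: "\<And>r. r < m \<Longrightarrow> h r < n"
  shows "psd_form m (\<lambda>r c. f (h r) (h c))"
  unfolding psd_form_def
proof
  fix v
  define U :: "nat \<Rightarrow> complex" where "U i = (\<Sum>r\<in>{r. r \<in> {..<m} \<and> h r = i}. v r)" for i
  have hs: "h ` {..<m} \<subseteq> {..<n}" using h by auto
  have inner: "(\<Sum>j<n. f a j * U j) = (\<Sum>c<m. f a (h c) * v c)" for a
  proof -
    have "(\<Sum>j<n. f a j * U j) = (\<Sum>j<n. \<Sum>c\<in>{c. c \<in> {..<m} \<and> h c = j}. f a (h c) * v c)"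
      unfolding U_def sum_distrib_left by (intro sum.cong) auto
    also have "\<dots> = (\<Sum>c<m. f a (h c) * v c)" by (rule sum.group[OF _ _ hs]) auto
    finally show ?thesis .
  qed
  have "quad_form n f U = (\<Sum>i<n. cnj (U i) * (\<Sum>c<m. f i (h c) * v c))"
    unfolding quad_form_def inner[symmetric] by (simp add: sum_distrib_left mult.assoc)
  also have "\<dots> = (\<Sum>i<n. \<Sum>r\<in>{r. r \<in> {..<m} \<and> h r = i}. cnj (v r) * (\<Sum>c<m. f (h r) (h c) * v c))"
    unfolding U_def cnj_sum sum_distrib_right by (intro sum.cong) auto
  also have "\<dots> = (\<Sum>r<m. cnj (v r) * (\<Sum>c<m. f (h r) (h c) * v c))"
    by (rule sum.group[OF _ _ hs]) auto
  also have "\<dots> = quad_form m (\<lambda>r c. f (h r) (h c)) v"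
    unfolding quad_form_def by (simp add: sum_distrib_left mult.assoc)
  finally show "0 \<le> quad_form m (\<lambda>r c. f (h r) (h c)) v"
    using psd_form_nonneg[OF f, of U] by simp
qed

lemma psd_op_iff_psd_form: "psd_op n A \<longleftrightarrow> A \<in> carrier_mat n n \<and> psd_form n (\<lambda>i j. A $$ (i,j))"
proof -
  have nonneg: "(Im z = 0 \<and> 0 \<le> Re z) \<longleftrightarrow> 0 \<le> z" for z :: complex
    by (auto simp: less_eq_complex_def)
  have key: "(\<Sum>i<n. cnj (v $ i) * (A *\<^sub>v v) $ i) = quad_form n (\<lambda>i j. A $$ (i,j)) (\<lambda>i. v $ i)"
    if "A \<in> carrier_mat n n" "v \<in> carrier_vec n" for v
    using that unfolding quad_form_def
    by (simp add: mult_mat_vec_def scalar_prod_def atLeast0LessThan sum_distrib_left mult.assoc)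
  have vec: "quad_form n (\<lambda>i j. A $$ (i,j)) v = quad_form n (\<lambda>i j. A $$ (i,j)) (\<lambda>i. vec n v $ i)" for v
    by (rule quad_form_cong) auto
  have "psd_op n A \<longleftrightarrow> A \<in> carrier_mat n n \<and>
      (\<forall>v \<in> carrier_vec n. 0 \<le> quad_form n (\<lambda>i j. A $$ (i,j)) (\<lambda>i. v $ i))"
    unfolding psd_op_def Let_def nonneg using key by auto
  also have "\<dots> \<longleftrightarrow> A \<in> carrier_mat n n \<and> psd_form n (\<lambda>i j. A $$ (i,j))"
    unfolding psd_form_def using vec vec_carrier by metis
  finally show ?thesis .
qed

lemma psd_op_carrier: "psd_op n A \<Longrightarrow> A \<in> carrier_mat n n"
  by (simp add: psd_op_def)

lemma density_op_carrier: "density_op n A \<Longrightarrow> A \<in> carrier_mat n n"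
  by (simp add: density_op_def psd_op_carrier)

lemma psd_op_hermitian: "psd_op n A \<Longrightarrow> hermitian_op n A"
  unfolding hermitian_op_def using psd_op_iff_psd_form psd_form_hermitian by blast

lemma psd_op_rank_one: "psd_op n (mat n n (\<lambda>(i,j). v i * cnj (v j)))"
proof -
  have "psd_form n (\<lambda>i j. mat n n (\<lambda>(i,j). v i * cnj (v j)) $$ (i,j))
      \<longleftrightarrow> psd_form n (\<lambda>i j. v i * cnj (v j))"
    by (rule psd_form_cong) simp
  then show ?thesis by (simp add: psd_op_iff_psd_form psd_form_rank_one)
qed

section \<open>Kronecker products and the cut \<open>AC : BD\<close>\<close>

lemma mult_add_less_mult: "i < m \<Longrightarrow> j < n \<Longrightarrow> i * n + j < m * (n::nat)"
proof -
  assume "i < m" "j < n"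
  then have "i * n + j < (i + 1) * n" by simp
  also have "\<dots> \<le> m * n" using \<open>i < m\<close> by (intro mult_le_mono1) simp
  finally show ?thesis .
qed

lemma less_mult_imp_mod_less: "r < m * n \<Longrightarrow> r mod n < (n::nat)"
  by (cases "n = 0") simp_all

lemma sum_lessThan_mult:
  fixes m n :: nat
  shows "(\<Sum>r<m * n. f r) = (\<Sum>i<m. \<Sum>j<n. f (i * n + j) :: 'a::comm_monoid_add)"
proof -
  have "(\<Sum>i<m. \<Sum>j<n. f (i * n + j)) = (\<Sum>p\<in>{..<m} \<times> {..<n}. f (fst p * n + snd p))"
    by (simp add: sum.cartesian_product case_prod_beta)
  also have "\<dots> = (\<Sum>r<m * n. f r)"
    by (rule sum.reindex_bij_witness[where i = "\<lambda>r. (r div n, r mod n)" and j = "\<lambda>p. fst p * n + snd p"])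
      (auto simp: less_mult_imp_div_less less_mult_imp_mod_less mult_add_less_mult)
  finally show ?thesis by simp
qed

lemma sum_product_interleave:
  "(\<Sum>b\<in>B. \<Sum>d\<in>D. \<Sum>b'\<in>B'. \<Sum>d'\<in>D'. F b b' * G d d') =
    (\<Sum>b\<in>B. \<Sum>b'\<in>B'. F b b') * (\<Sum>d\<in>D. \<Sum>d'\<in>D'. (G d d' :: 'a :: comm_semiring_0))"
  by (simp only: sum_product)

lemma mtrace_mult:
  "A \<in> carrier_mat n n \<Longrightarrow> B \<in> carrier_mat n n \<Longrightarrow> mtrace (A * B) = (\<Sum>i<n. \<Sum>j<n. A $$ (i,j) * B $$ (j,i))"
  unfolding mtrace_def by (simp add: scalar_prod_def atLeast0LessThan)

lemma kron_carrier:
  "A \<in> carrier_mat m m \<Longrightarrow> B \<in> carrier_mat n n \<Longrightarrow> kron A B \<in> carrier_mat (m * n) (m * n)"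
  unfolding kron_def by simp

lemma kron_index:
  "A \<in> carrier_mat m m \<Longrightarrow> B \<in> carrier_mat n n \<Longrightarrow> r < m * n \<Longrightarrow> c < m * n \<Longrightarrow>
    kron A B $$ (r,c) = A $$ (r div n, c div n) * B $$ (r mod n, c mod n)"
  unfolding kron_def by simp

lemma kron_index_mult_add:
  "A \<in> carrier_mat m m \<Longrightarrow> B \<in> carrier_mat n n \<Longrightarrow> i < m \<Longrightarrow> j < m \<Longrightarrow> k < n \<Longrightarrow> l < n \<Longrightarrow>
    kron A B $$ (i * n + k, j * n + l) = A $$ (i,j) * B $$ (k,l)"
  by (simp add: kron_index mult_add_less_mult)

lemma mtrace_kron:
  assumes "A \<in> carrier_mat m m" "B \<in> carrier_mat n n"
  shows "mtrace (kron A B) = mtrace A * mtrace B"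
proof -
  have "mtrace (kron A B) = (\<Sum>r<m * n. kron A B $$ (r,r))"
    using kron_carrier[OF assms] by (simp add: mtrace_def)
  also have "\<dots> = (\<Sum>i<m. \<Sum>k<n. A $$ (i,i) * B $$ (k,k))"
    unfolding sum_lessThan_mult using assms by (simp add: kron_index_mult_add)
  also have "\<dots> = mtrace A * mtrace B"
    using assms by (simp add: mtrace_def sum_product)
  finally show ?thesis .
qed

lemma psd_op_kron:
  assumes A: "psd_op m A" and B: "psd_op n B"
  shows "psd_op (m * n) (kron A B)"
proof -
  have cA: "A \<in> carrier_mat m m" and pA: "psd_form m (\<lambda>i j. A $$ (i,j))"
    and cB: "B \<in> carrier_mat n n" and pB: "psd_form n (\<lambda>i j. B $$ (i,j))"
    using A B psd_op_iff_psd_form by auto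
  have "psd_form (m * n) (\<lambda>r c. A $$ (r div n, c div n))"
    by (rule psd_form_reindex[OF pA]) (simp add: less_mult_imp_div_less)
  moreover have "psd_form (m * n) (\<lambda>r c. B $$ (r mod n, c mod n))"
    by (rule psd_form_reindex[OF pB]) (simp add: less_mult_imp_mod_less)
  ultimately have "psd_form (m * n) (\<lambda>r c. A $$ (r div n, c div n) * B $$ (r mod n, c mod n))"
    by (rule psd_form_schur_product)
  then have "psd_form (m * n) (\<lambda>r c. kron A B $$ (r,c))"
    by (subst psd_form_cong) (auto simp: kron_index[OF cA cB])
  then show ?thesis using kron_carrier[OF cA cB] psd_op_iff_psd_form by blast
qed

lemma density_op_kron:
  assumes "density_op m A" "density_op n B"
  shows "density_op (m * n) (kron A B)"
  using assms psd_op_carrier[of m A] psd_op_carrier[of n B]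
  by (simp add: density_op_def psd_op_kron mtrace_kron)

text \<open>The basis index \<open>r\<close> of \<open>(A \<otimes> C) \<otimes> (B \<otimes> D)\<close> used by \<open>cut_tensor\<close> corresponds to
  the index \<open>ab_index dB dC dD r\<close> of \<open>A \<otimes> B\<close> and the index \<open>cd_index dB dC dD r\<close> of \<open>C \<otimes> D\<close>.\<close>

definition ab_index :: "nat \<Rightarrow> nat \<Rightarrow> nat \<Rightarrow> nat \<Rightarrow> nat" where
  "ab_index dB dC dD r = (r div (dB * dD) div dC) * dB + r mod (dB * dD) div dD"

definition cd_index :: "nat \<Rightarrow> nat \<Rightarrow> nat \<Rightarrow> nat \<Rightarrow> nat" where
  "cd_index dB dC dD r = (r div (dB * dD) mod dC) * dD + r mod (dB * dD) mod dD"

lemma cut_tensor_carrier: "cut_tensor dA dB dC dD X \<tau> \<in> carrier_mat (dA * dC * (dB * dD)) (dA * dC * (dB * dD))"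
  unfolding cut_tensor_def by simp

lemma cut_tensor_index:
  "r < dA * dC * (dB * dD) \<Longrightarrow> c < dA * dC * (dB * dD) \<Longrightarrow>
    cut_tensor dA dB dC dD X \<tau> $$ (r,c)
      = X $$ (ab_index dB dC dD r, ab_index dB dC dD c) * \<tau> $$ (cd_index dB dC dD r, cd_index dB dC dD c)"
  unfolding cut_tensor_def ab_index_def cd_index_def by (simp add: Let_def)

lemma cut_index_bounds:
  fixes r dA dB dC dD :: nat
  assumes "r < dA * dC * (dB * dD)"
  shows "r div (dB * dD) div dC < dA" "r div (dB * dD) mod dC < dC"
    "r mod (dB * dD) div dD < dB" "r mod (dB * dD) mod dD < dD"
proof -
  have "r div (dB * dD) < dA * dC" "r mod (dB * dD) < dB * dD"
    using assms by (simp_all add: less_mult_imp_div_less less_mult_imp_mod_less)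
  then show "r div (dB * dD) div dC < dA" "r div (dB * dD) mod dC < dC"
    "r mod (dB * dD) div dD < dB" "r mod (dB * dD) mod dD < dD"
    by (simp_all add: less_mult_imp_div_less less_mult_imp_mod_less)
qed

lemma ab_index_less: "r < dA * dC * (dB * dD) \<Longrightarrow> ab_index dB dC dD r < dA * dB"
  unfolding ab_index_def using cut_index_bounds by (simp add: mult_add_less_mult)

lemma cd_index_less: "r < dA * dC * (dB * dD) \<Longrightarrow> cd_index dB dC dD r < dC * dD"
  unfolding cd_index_def using cut_index_bounds by (simp add: mult_add_less_mult)

lemma ab_index_div_mod:
  assumes "r < dA * dC * (dB * dD)"
  shows "ab_index dB dC dD r div dB = r div (dB * dD) div dC"
    "ab_index dB dC dD r mod dB = r mod (dB * dD) div dD"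
  using cut_index_bounds(3)[OF assms] unfolding ab_index_def by simp_all

lemma cd_index_div_mod:
  assumes "r < dA * dC * (dB * dD)"
  shows "cd_index dB dC dD r div dD = r div (dB * dD) mod dC"
    "cd_index dB dC dD r mod dD = r mod (dB * dD) mod dD"
  using cut_index_bounds(4)[OF assms] unfolding cd_index_def by simp_all

lemma ab_cd_index_split:
  assumes "\<gamma> < dC" "\<beta> < dB" "\<delta> < dD"
  shows "ab_index dB dC dD ((\<alpha> * dC + \<gamma>) * (dB * dD) + (\<beta> * dD + \<delta>)) = \<alpha> * dB + \<beta>"
    "cd_index dB dC dD ((\<alpha> * dC + \<gamma>) * (dB * dD) + (\<beta> * dD + \<delta>)) = \<gamma> * dD + \<delta>"
  using assms by (simp_all add: ab_index_def cd_index_def mult_add_less_mult)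

lemma psd_op_cut_tensor:
  assumes X: "psd_op (dA * dB) X" and \<tau>: "psd_op (dC * dD) \<tau>"
  shows "psd_op (dA * dC * (dB * dD)) (cut_tensor dA dB dC dD X \<tau>)"
proof -
  have pX: "psd_form (dA * dB) (\<lambda>i j. X $$ (i,j))" and p\<tau>: "psd_form (dC * dD) (\<lambda>i j. \<tau> $$ (i,j))"
    using X \<tau> psd_op_iff_psd_form by auto
  have "psd_form (dA * dC * (dB * dD)) (\<lambda>r c. X $$ (ab_index dB dC dD r, ab_index dB dC dD c))"
    by (rule psd_form_reindex[OF pX]) (simp add: ab_index_less)
  moreover have "psd_form (dA * dC * (dB * dD)) (\<lambda>r c. \<tau> $$ (cd_index dB dC dD r, cd_index dB dC dD c))"
    by (rule psd_form_reindex[OF p\<tau>]) (simp add: cd_index_less)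
  ultimately have "psd_form (dA * dC * (dB * dD)) (\<lambda>r c. X $$ (ab_index dB dC dD r, ab_index dB dC dD c)
      * \<tau> $$ (cd_index dB dC dD r, cd_index dB dC dD c))"
    by (rule psd_form_schur_product)
  then have "psd_form (dA * dC * (dB * dD)) (\<lambda>r c. cut_tensor dA dB dC dD X \<tau> $$ (r,c))"
    by (subst psd_form_cong) (auto simp: cut_tensor_index)
  then show ?thesis using cut_tensor_carrier psd_op_iff_psd_form by blast
qed

lemma mtrace_cut_tensor:
  assumes "X \<in> carrier_mat (dA * dB) (dA * dB)" "\<tau> \<in> carrier_mat (dC * dD) (dC * dD)"
  shows "mtrace (cut_tensor dA dB dC dD X \<tau>) = mtrace X * mtrace \<tau>"
proof -
  have "mtrace (cut_tensor dA dB dC dD X \<tau>) = (\<Sum>r<dA * dC * (dB * dD). cut_tensor dA dB dC dD X \<tau> $$ (r,r))"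
    unfolding mtrace_def using cut_tensor_carrier[THEN carrier_matD(1)] by simp
  also have "\<dots> = (\<Sum>\<alpha><dA. \<Sum>\<gamma><dC. \<Sum>\<beta><dB. \<Sum>\<delta><dD.
      X $$ (\<alpha> * dB + \<beta>, \<alpha> * dB + \<beta>) * \<tau> $$ (\<gamma> * dD + \<delta>, \<gamma> * dD + \<delta>))"
    unfolding sum_lessThan_mult by (simp add: cut_tensor_index mult_add_less_mult ab_cd_index_split)
  also have "\<dots> = mtrace X * mtrace \<tau>"
    unfolding sum_product_interleave using assms by (simp add: mtrace_def sum_lessThan_mult)
  finally show ?thesis .
qed

lemma density_op_cut_tensor:
  assumes "density_op (dA * dB) X" "density_op (dC * dD) \<tau>"
  shows "density_op (dA * dC * (dB * dD)) (cut_tensor dA dB dC dD X \<tau>)"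
  using assms psd_op_carrier[of "dA * dB" X] psd_op_carrier[of "dC * dD" \<tau>]
  by (simp add: density_op_def psd_op_cut_tensor mtrace_cut_tensor)

lemma hermitian_cut_tensor:
  assumes X: "hermitian_op (dA * dB) X" and \<tau>: "hermitian_op (dC * dD) \<tau>"
  shows "hermitian_op (dA * dC * (dB * dD)) (cut_tensor dA dB dC dD X \<tau>)"
  unfolding hermitian_op_def
proof (intro conjI allI impI cut_tensor_carrier)
  fix i j
  assume i: "i < dA * dC * (dB * dD)" and j: "j < dA * dC * (dB * dD)"
  have "X $$ (ab_index dB dC dD i, ab_index dB dC dD j) = cnj (X $$ (ab_index dB dC dD j, ab_index dB dC dD i))"
    using X ab_index_less[OF i] ab_index_less[OF j] unfolding hermitian_op_def by blast
  moreover have "\<tau> $$ (cd_index dB dC dD i, cd_index dB dC dD j) = cnj (\<tau> $$ (cd_index dB dC dD j, cd_index dB dC dD i))"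
    using \<tau> cd_index_less[OF i] cd_index_less[OF j] unfolding hermitian_op_def by blast
  ultimately show "cut_tensor dA dB dC dD X \<tau> $$ (i,j) = cnj (cut_tensor dA dB dC dD X \<tau> $$ (j,i))"
    using i j by (simp add: cut_tensor_index)
qed

lemma pseudo_state_cut_tensor:
  assumes X: "pseudo_state (dA * dB) X" and \<tau>: "density_op (dC * dD) \<tau>"
  shows "pseudo_state (dA * dC * (dB * dD)) (cut_tensor dA dB dC dD X \<tau>)"
proof -
  have "hermitian_op (dC * dD) \<tau>" "\<tau> \<in> carrier_mat (dC * dD) (dC * dD)"
    using \<tau> psd_op_hermitian psd_op_carrier by (auto simp: density_op_def)
  moreover have "X \<in> carrier_mat (dA * dB) (dA * dB)"
    using X by (simp add: pseudo_state_def hermitian_op_def)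
  ultimately show ?thesis
    using assms by (simp add: pseudo_state_def density_op_def hermitian_cut_tensor mtrace_cut_tensor)
qed

lemma cut_tensor_kron:
  assumes A: "A \<in> carrier_mat dA dA" and B: "B \<in> carrier_mat dB dB"
    and C: "C \<in> carrier_mat dC dC" and D: "D \<in> carrier_mat dD dD"
  shows "cut_tensor dA dB dC dD (kron A B) (kron C D) = kron (kron A C) (kron B D)"
proof (rule eq_matI)
  fix r c
  assume "r < dim_row (kron (kron A C) (kron B D))" "c < dim_col (kron (kron A C) (kron B D))"
  then have r: "r < dA * dC * (dB * dD)" and c: "c < dA * dC * (dB * dD)"
    using kron_carrier[OF kron_carrier[OF A C] kron_carrier[OF B D]] by auto
  have "r div (dB * dD) < dA * dC" "c div (dB * dD) < dA * dC"
    "r mod (dB * dD) < dB * dD" "c mod (dB * dD) < dB * dD"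
    using r c by (simp_all add: less_mult_imp_div_less less_mult_imp_mod_less)
  then have "kron (kron A C) (kron B D) $$ (r,c)
      = A $$ (r div (dB * dD) div dC, c div (dB * dD) div dC) * C $$ (r div (dB * dD) mod dC, c div (dB * dD) mod dC)
        * (B $$ (r mod (dB * dD) div dD, c mod (dB * dD) div dD) * D $$ (r mod (dB * dD) mod dD, c mod (dB * dD) mod dD))"
    using r c by (simp add: kron_index[OF kron_carrier[OF A C] kron_carrier[OF B D]] kron_index[OF A C] kron_index[OF B D])
  moreover have "cut_tensor dA dB dC dD (kron A B) (kron C D) $$ (r,c)
      = A $$ (r div (dB * dD) div dC, c div (dB * dD) div dC) * B $$ (r mod (dB * dD) div dD, c mod (dB * dD) div dD)
        * (C $$ (r div (dB * dD) mod dC, c div (dB * dD) mod dC) * D $$ (r mod (dB * dD) mod dD, c mod (dB * dD) mod dD))"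
    using r c by (simp add: cut_tensor_index kron_index[OF A B] kron_index[OF C D] ab_index_less cd_index_less
        ab_index_div_mod cd_index_div_mod)
  ultimately show "cut_tensor dA dB dC dD (kron A B) (kron C D) $$ (r,c) = kron (kron A C) (kron B D) $$ (r,c)"
    by (simp add: mult_ac)
qed (use A B C D in \<open>simp_all add: cut_tensor_def kron_def\<close>)

lemma separable_carrier: "separable dA dB X \<Longrightarrow> X \<in> carrier_mat (dA * dB) (dA * dB)"
  unfolding separable_def by auto

lemma cut_tensor_mixture_index:
  assumes AB: "\<And>i. i < n \<Longrightarrow> \<sigma>A i \<in> carrier_mat dA dA \<and> \<sigma>B i \<in> carrier_mat dB dB"
    and CD: "\<And>j. j < n' \<Longrightarrow> \<sigma>C j \<in> carrier_mat dC dC \<and> \<sigma>D j \<in> carrier_mat dD dD"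
    and r: "r < dA * dC * (dB * dD)" and c: "c < dA * dC * (dB * dD)"
  shows "cut_tensor dA dB dC dD
      (mat (dA * dB) (dA * dB) (\<lambda>(r,c). \<Sum>i<n. complex_of_real (q i) * kron (\<sigma>A i) (\<sigma>B i) $$ (r,c)))
      (mat (dC * dD) (dC * dD) (\<lambda>(r,c). \<Sum>j<n'. complex_of_real (q' j) * kron (\<sigma>C j) (\<sigma>D j) $$ (r,c))) $$ (r,c)
    = (\<Sum>i<n. \<Sum>j<n'. complex_of_real (q i * q' j) * kron (kron (\<sigma>A i) (\<sigma>C j)) (kron (\<sigma>B i) (\<sigma>D j)) $$ (r,c))"
    (is "?lhs = _")
proof -
  have "?lhs = (\<Sum>i<n. complex_of_real (q i) * kron (\<sigma>A i) (\<sigma>B i) $$ (ab_index dB dC dD r, ab_index dB dC dD c))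
      * (\<Sum>j<n'. complex_of_real (q' j) * kron (\<sigma>C j) (\<sigma>D j) $$ (cd_index dB dC dD r, cd_index dB dC dD c))"
    using r c ab_index_less[OF r] ab_index_less[OF c] cd_index_less[OF r] cd_index_less[OF c]
    by (simp add: cut_tensor_index)
  also have "\<dots> = (\<Sum>i<n. \<Sum>j<n'. complex_of_real (q i * q' j)
      * cut_tensor dA dB dC dD (kron (\<sigma>A i) (\<sigma>B i)) (kron (\<sigma>C j) (\<sigma>D j)) $$ (r,c))"
    unfolding sum_product by (intro sum.cong refl) (simp add: cut_tensor_index[OF r c] mult_ac)
  also have "\<dots> = (\<Sum>i<n. \<Sum>j<n'. complex_of_real (q i * q' j)
      * kron (kron (\<sigma>A i) (\<sigma>C j)) (kron (\<sigma>B i) (\<sigma>D j)) $$ (r,c))"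
    using AB CD by (simp add: cut_tensor_kron)
  finally show ?thesis .
qed

lemma separable_cut_tensor:
  assumes X: "separable dA dB X" and \<tau>: "separable dC dD \<tau>"
  shows "separable (dA * dC) (dB * dD) (cut_tensor dA dB dC dD X \<tau>)"
proof -
  obtain n :: nat and q :: "nat \<Rightarrow> real" and \<sigma>A \<sigma>B where
    q: "\<forall>i<n. q i \<ge> 0 \<and> density_op dA (\<sigma>A i) \<and> density_op dB (\<sigma>B i)" "(\<Sum>i<n. q i) = 1" and
    X_eq: "X = mat (dA * dB) (dA * dB) (\<lambda>(r,c). \<Sum>i<n. complex_of_real (q i) * kron (\<sigma>A i) (\<sigma>B i) $$ (r,c))"
    using X unfolding separable_def by blast
  obtain n' :: nat and q' :: "nat \<Rightarrow> real" and \<sigma>C \<sigma>D where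
    q': "\<forall>j<n'. q' j \<ge> 0 \<and> density_op dC (\<sigma>C j) \<and> density_op dD (\<sigma>D j)" "(\<Sum>j<n'. q' j) = 1" and
    \<tau>_eq: "\<tau> = mat (dC * dD) (dC * dD) (\<lambda>(r,c). \<Sum>j<n'. complex_of_real (q' j) * kron (\<sigma>C j) (\<sigma>D j) $$ (r,c))"
    using \<tau> unfolding separable_def by blast
  define Q where "Q k = q (k div n') * q' (k mod n')" for k
  define SA where "SA k = kron (\<sigma>A (k div n')) (\<sigma>C (k mod n'))" for k
  define SB where "SB k = kron (\<sigma>B (k div n')) (\<sigma>D (k mod n'))" for k
  have k: "k div n' < n" "k mod n' < n'" if "k < n * n'" for k
    using that by (simp_all add: less_mult_imp_div_less less_mult_imp_mod_less)
  have "\<forall>k<n * n'. Q k \<ge> 0 \<and> density_op (dA * dC) (SA k) \<and> density_op (dB * dD) (SB k)"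
    using q(1) q'(1) k unfolding Q_def SA_def SB_def by (auto intro!: density_op_kron)
  moreover have "(\<Sum>k<n * n'. Q k) = 1"
    unfolding sum_lessThan_mult Q_def using q(2) q'(2) by (simp add: sum_product[symmetric])
  moreover have "cut_tensor dA dB dC dD X \<tau> = mat (dA * dC * (dB * dD)) (dA * dC * (dB * dD))
      (\<lambda>(r,c). \<Sum>k<n * n'. complex_of_real (Q k) * kron (SA k) (SB k) $$ (r,c))"
    unfolding X_eq \<tau>_eq using q(1) q'(1)
    by (intro eq_matI) (auto simp: cut_tensor_mixture_index density_op_carrier sum_lessThan_mult Q_def SA_def SB_def
        cut_tensor_carrier[THEN carrier_matD(1)] cut_tensor_carrier[THEN carrier_matD(2)])
  ultimately show ?thesis
    unfolding separable_def by (intro exI[of _ "n * n'"] exI[of _ Q] exI[of _ SA] exI[of _ SB]) simp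
qed

lemma cut_tensor_affine:
  assumes X: "X \<in> carrier_mat (dA * dB) (dA * dB)" and W: "W \<in> carrier_mat (dA * dB) (dA * dB)"
  shows "cut_tensor dA dB dC dD (c \<cdot>\<^sub>m (X + t \<cdot>\<^sub>m W)) \<tau>
    = c \<cdot>\<^sub>m (cut_tensor dA dB dC dD X \<tau> + t \<cdot>\<^sub>m cut_tensor dA dB dC dD W \<tau>)"
proof (rule eq_matI)
  fix i j
  assume "i < dim_row (c \<cdot>\<^sub>m (cut_tensor dA dB dC dD X \<tau> + t \<cdot>\<^sub>m cut_tensor dA dB dC dD W \<tau>))"
    "j < dim_col (c \<cdot>\<^sub>m (cut_tensor dA dB dC dD X \<tau> + t \<cdot>\<^sub>m cut_tensor dA dB dC dD W \<tau>))"
  then have i: "i < dA * dC * (dB * dD)" and j: "j < dA * dC * (dB * dD)"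
    using cut_tensor_carrier[of dA dB dC dD W \<tau>] by auto
  have "(c \<cdot>\<^sub>m (cut_tensor dA dB dC dD X \<tau> + t \<cdot>\<^sub>m cut_tensor dA dB dC dD W \<tau>)) $$ (i,j)
      = c * (cut_tensor dA dB dC dD X \<tau> $$ (i,j) + t * cut_tensor dA dB dC dD W \<tau> $$ (i,j))"
    using i j cut_tensor_carrier[of dA dB dC dD X \<tau>] cut_tensor_carrier[of dA dB dC dD W \<tau>] by simp
  moreover have "cut_tensor dA dB dC dD (c \<cdot>\<^sub>m (X + t \<cdot>\<^sub>m W)) \<tau> $$ (i,j)
      = c * (X $$ (ab_index dB dC dD i, ab_index dB dC dD j) + t * W $$ (ab_index dB dC dD i, ab_index dB dC dD j))
        * \<tau> $$ (cd_index dB dC dD i, cd_index dB dC dD j)"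
    using i j X W ab_index_less[OF i] ab_index_less[OF j] by (simp add: cut_tensor_index)
  ultimately show "cut_tensor dA dB dC dD (c \<cdot>\<^sub>m (X + t \<cdot>\<^sub>m W)) \<tau> $$ (i,j)
      = (c \<cdot>\<^sub>m (cut_tensor dA dB dC dD X \<tau> + t \<cdot>\<^sub>m cut_tensor dA dB dC dD W \<tau>)) $$ (i,j)"
    using i j by (simp add: cut_tensor_index algebra_simps)
qed (simp_all add: cut_tensor_def)

section \<open>Linear maps, their duals and measurement statistics\<close>

lemma eunit_carrier: "eunit d i j \<in> carrier_mat d d"
  unfolding eunit_def by simp

lemma lin_map_carrier: "lin_map d d' L \<Longrightarrow> X \<in> carrier_mat d d \<Longrightarrow> L X \<in> carrier_mat d' d'"
  unfolding lin_map_def by auto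

lemma lin_map_add:
  "lin_map d d' L \<Longrightarrow> X \<in> carrier_mat d d \<Longrightarrow> Y \<in> carrier_mat d d \<Longrightarrow> L (X + Y) = L X + L Y"
  unfolding lin_map_def by blast

lemma lin_map_smult: "lin_map d d' L \<Longrightarrow> X \<in> carrier_mat d d \<Longrightarrow> L (z \<cdot>\<^sub>m X) = z \<cdot>\<^sub>m L X"
  unfolding lin_map_def by blast

lemma lin_map_index_expand_on:
  assumes L: "lin_map d d' L" and r: "r < d'" and c: "c < d'" and S: "finite S"
  shows "L (mat d d (\<lambda>p. if p \<in> S then X $$ p else 0)) $$ (r,c)
    = (\<Sum>p\<in>S. X $$ p * L (eunit d (fst p) (snd p)) $$ (r,c))"
  using S
proof (induction S rule: finite_induct)
  case empty
  have zero: "mat d d (\<lambda>p. if p \<in> {} then X $$ p else 0) = 0 \<cdot>\<^sub>m (0\<^sub>m d d)"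
    by (rule eq_matI) auto
  have "L (0 \<cdot>\<^sub>m (0\<^sub>m d d)) = 0 \<cdot>\<^sub>m L (0\<^sub>m d d)"
    using lin_map_smult[OF L zero_carrier_mat] .
  then have "L (0 \<cdot>\<^sub>m (0\<^sub>m d d)) $$ (r,c) = (0 \<cdot>\<^sub>m L (0\<^sub>m d d)) $$ (r,c)"
    by (rule arg_cong)
  also have "\<dots> = 0"
    using lin_map_carrier[OF L zero_carrier_mat] r c by simp
  finally show ?case unfolding zero by simp
next
  case (insert p S)
  let ?X = "mat d d (\<lambda>p. if p \<in> S then X $$ p else 0)"
  let ?E = "eunit d (fst p) (snd p)"
  have "mat d d (\<lambda>q. if q \<in> insert p S then X $$ q else 0) = ?X + (X $$ p) \<cdot>\<^sub>m ?E"
    using insert(2) by (intro eq_matI) (auto simp: eunit_def)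
  moreover have "L (?X + (X $$ p) \<cdot>\<^sub>m ?E) = L ?X + (X $$ p) \<cdot>\<^sub>m L ?E"
    using L by (simp add: lin_map_add lin_map_smult eunit_carrier)
  ultimately have "L (mat d d (\<lambda>q. if q \<in> insert p S then X $$ q else 0)) = L ?X + (X $$ p) \<cdot>\<^sub>m L ?E"
    by simp
  moreover have "L ?X \<in> carrier_mat d' d'" "L ?E \<in> carrier_mat d' d'"
    using L by (simp_all add: lin_map_carrier eunit_carrier)
  ultimately show ?case using r c insert by simp
qed

lemma lin_map_index_expand:
  assumes L: "lin_map d d' L" and X: "X \<in> carrier_mat d d" and r: "r < d'" and c: "c < d'"
  shows "L X $$ (r,c) = (\<Sum>i<d. \<Sum>j<d. X $$ (i,j) * L (eunit d i j) $$ (r,c))"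
proof -
  have "mat d d (\<lambda>p. if p \<in> {..<d} \<times> {..<d} then X $$ p else 0) = X"
    using X by (intro eq_matI) auto
  then show ?thesis
    using lin_map_index_expand_on[OF L r c, of "{..<d} \<times> {..<d}" X]
    by (simp add: sum.cartesian_product case_prod_beta)
qed

lemma cp_map_psd:
  assumes L: "cp_map d d' L" and X: "psd_op d X"
  shows "psd_op d' (L X)"
proof -
  have lin: "lin_map d d' L" using L cp_map_def by blast
  have cX: "X \<in> carrier_mat d d" using X psd_op_carrier by blast
  have "psd_op (1 * d) X \<longrightarrow> psd_op (1 * d') (map_tensor 1 d 1 d' (\<lambda>Y. Y) L X)"
    using L unfolding cp_map_def by blast
  then have "psd_op d' (map_tensor 1 d 1 d' (\<lambda>Y. Y) L X)"
    using X by simp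
  moreover have "map_tensor 1 d 1 d' (\<lambda>Y. Y) L X = L X"
  proof (rule eq_matI)
    fix r c
    assume "r < dim_row (L X)" "c < dim_col (L X)"
    then have "r < d'" "c < d'" using lin_map_carrier[OF lin cX] by auto
    then show "map_tensor 1 d 1 d' (\<lambda>Y. Y) L X $$ (r,c) = L X $$ (r,c)"
      by (simp add: map_tensor_def eunit_def lin_map_index_expand[OF lin cX])
  qed (use lin_map_carrier[OF lin cX] in \<open>auto simp: map_tensor_def\<close>)
  ultimately show ?thesis by simp
qed

lemma sum_swap_pair:
  "(\<Sum>i\<in>A. \<Sum>j\<in>B. \<Sum>r\<in>C. \<Sum>c\<in>D. g i j r c)
    = (\<Sum>r\<in>C. \<Sum>c\<in>D. \<Sum>i\<in>A. \<Sum>j\<in>B. (g i j r c :: 'a::comm_monoid_add))"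
proof -
  have "(\<Sum>i\<in>A. \<Sum>j\<in>B. \<Sum>r\<in>C. \<Sum>c\<in>D. g i j r c) = (\<Sum>i\<in>A. \<Sum>r\<in>C. \<Sum>j\<in>B. \<Sum>c\<in>D. g i j r c)"
    by (intro sum.cong refl sum.swap)
  also have "\<dots> = (\<Sum>i\<in>A. \<Sum>r\<in>C. \<Sum>c\<in>D. \<Sum>j\<in>B. g i j r c)"
    by (intro sum.cong refl sum.swap)
  also have "\<dots> = (\<Sum>r\<in>C. \<Sum>i\<in>A. \<Sum>c\<in>D. \<Sum>j\<in>B. g i j r c)"
    by (rule sum.swap)
  also have "\<dots> = (\<Sum>r\<in>C. \<Sum>c\<in>D. \<Sum>i\<in>A. \<Sum>j\<in>B. g i j r c)"
    by (intro sum.cong refl sum.swap)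
  finally show ?thesis .
qed

text \<open>The adjoint of \<open>L\<close> with respect to the trace pairing, i.e. the Heisenberg picture of \<open>L\<close>:
  \<open>tr (dual_map d L Y * X) = tr (Y * L X)\<close>.\<close>

definition dual_map :: "nat \<Rightarrow> (complex mat \<Rightarrow> complex mat) \<Rightarrow> complex mat \<Rightarrow> complex mat" where
  "dual_map d L Y = mat d d (\<lambda>(i,j). \<Sum>r<d. \<Sum>c<d. Y $$ (r,c) * L (eunit d j i) $$ (c,r))"

lemma dual_map_carrier: "dual_map d L Y \<in> carrier_mat d d"
  unfolding dual_map_def by simp

lemma dual_map_trace:
  assumes L: "lin_map d d L" and X: "X \<in> carrier_mat d d"
  shows "(\<Sum>i<d. \<Sum>j<d. dual_map d L Y $$ (i,j) * X $$ (j,i)) = (\<Sum>r<d. \<Sum>c<d. Y $$ (r,c) * L X $$ (c,r))"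
proof -
  have "(\<Sum>i<d. \<Sum>j<d. dual_map d L Y $$ (i,j) * X $$ (j,i))
      = (\<Sum>i<d. \<Sum>j<d. \<Sum>r<d. \<Sum>c<d. Y $$ (r,c) * (X $$ (j,i) * L (eunit d j i) $$ (c,r)))"
    by (simp add: dual_map_def sum_distrib_left sum_distrib_right mult_ac)
  also have "\<dots> = (\<Sum>r<d. \<Sum>c<d. \<Sum>i<d. \<Sum>j<d. Y $$ (r,c) * (X $$ (j,i) * L (eunit d j i) $$ (c,r)))"
    by (rule sum_swap_pair)
  also have "\<dots> = (\<Sum>r<d. \<Sum>c<d. \<Sum>j<d. \<Sum>i<d. Y $$ (r,c) * (X $$ (j,i) * L (eunit d j i) $$ (c,r)))"
    by (intro sum.cong refl sum.swap)
  also have "\<dots> = (\<Sum>r<d. \<Sum>c<d. Y $$ (r,c) * L X $$ (c,r))"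
    by (simp add: lin_map_index_expand[OF L X] sum_distrib_left)
  finally show ?thesis .
qed

lemma dual_map_psd:
  assumes L: "cp_map d d L" and Y: "psd_op d Y"
  shows "psd_op d (dual_map d L Y)"
proof -
  have lin: "lin_map d d L" using L cp_map_def by blast
  have pY: "psd_form d (\<lambda>i j. Y $$ (i,j))" using Y psd_op_iff_psd_form by auto
  have "0 \<le> quad_form d (\<lambda>i j. dual_map d L Y $$ (i,j)) v" for v
  proof -
    define X where "X = mat d d (\<lambda>(i,j). v i * cnj (v j))"
    have cX: "X \<in> carrier_mat d d" unfolding X_def by simp
    have pLX: "psd_form d (\<lambda>i j. L X $$ (i,j))"
      using cp_map_psd[OF L psd_op_rank_one] psd_op_iff_psd_form unfolding X_def by auto
    have "quad_form d (\<lambda>i j. dual_map d L Y $$ (i,j)) v = (\<Sum>i<d. \<Sum>j<d. dual_map d L Y $$ (i,j) * X $$ (j,i))"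
      unfolding quad_form_def X_def by (intro sum.cong refl) (simp add: mult_ac)
    also have "\<dots> = (\<Sum>r<d. \<Sum>c<d. Y $$ (r,c) * L X $$ (c,r))"
      by (rule dual_map_trace[OF lin cX])
    finally show ?thesis using psd_form_trace_nonneg[OF pY pLX] by simp
  qed
  then show ?thesis using dual_map_carrier psd_op_iff_psd_form psd_form_def by blast
qed

lemma dual_map_sum_index:
  assumes "\<And>r c. r < d \<Longrightarrow> c < d \<Longrightarrow> (\<Sum>a<n. M a $$ (r,c)) = Z $$ (r,c)" and "i < d" "j < d"
  shows "(\<Sum>a<n. dual_map d L (M a) $$ (i,j)) = dual_map d L Z $$ (i,j)"
proof -
  have "(\<Sum>a<n. dual_map d L (M a) $$ (i,j)) = (\<Sum>r<d. \<Sum>c<d. \<Sum>a<n. M a $$ (r,c) * L (eunit d j i) $$ (c,r))"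
    using assms(2,3) by (simp add: dual_map_def sum.swap[of _ "{..<n}"])
  also have "\<dots> = dual_map d L Z $$ (i,j)"
    using assms by (simp add: dual_map_def sum_distrib_right[symmetric])
  finally show ?thesis .
qed

lemma instrument_dual_map_unital:
  assumes I: "instrument d m L" and i: "i < d" and j: "j < d"
  shows "(\<Sum>x<m. dual_map d (L x) (1\<^sub>m d) $$ (i,j)) = (1\<^sub>m d :: complex mat) $$ (i,j)"
proof -
  have delta: "(\<Sum>c<d. (if r = c then 1 else 0) * g c) = g r" if "r < d" for r and g :: "nat \<Rightarrow> complex"
  proof -
    have "(\<Sum>c<d. (if r = c then 1 else 0) * g c) = (\<Sum>c<d. if r = c then g c else 0)"
      by (rule sum.cong) auto
    then show ?thesis using that by simp
  qed
  have "dual_map d (L x) (1\<^sub>m d) $$ (i,j) = mtrace (L x (eunit d j i))" if "x < m" for x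
  proof -
    have "L x (eunit d j i) \<in> carrier_mat d d"
      using I that eunit_carrier lin_map_carrier unfolding instrument_def cp_map_def by blast
    then show ?thesis using i j by (simp add: dual_map_def mtrace_def delta)
  qed
  then have "(\<Sum>x<m. dual_map d (L x) (1\<^sub>m d) $$ (i,j)) = (\<Sum>x<m. mtrace (L x (eunit d j i)))"
    by simp
  also have "\<dots> = mtrace (eunit d j i)"
    using I eunit_carrier unfolding instrument_def by blast
  also have "\<dots> = (1\<^sub>m d :: complex mat) $$ (i,j)"
    using i j by (cases "i = j") (auto simp: mtrace_def eunit_def intro!: sum.neutral)
  finally show ?thesis .
qed

lemma mtrace_mult_psd_nonneg:
  assumes A: "psd_op d A" and B: "psd_op d B"
  shows "0 \<le> mtrace (A * B)"
proof -
  have "A \<in> carrier_mat d d" "B \<in> carrier_mat d d"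
    "psd_form d (\<lambda>i j. A $$ (i,j))" "psd_form d (\<lambda>i j. B $$ (i,j))"
    using A B by (simp_all add: psd_op_iff_psd_form)
  then show ?thesis using psd_form_trace_nonneg by (simp add: mtrace_mult)
qed

lemma mtrace_povm_mult_sum:
  assumes M: "povm d n M" and B: "B \<in> carrier_mat d d"
  shows "(\<Sum>a<n. mtrace (M a * B)) = mtrace B"
proof -
  have "M a \<in> carrier_mat d d" if "a < n" for a
    using M that by (simp add: povm_def psd_op_carrier)
  then have "(\<Sum>a<n. mtrace (M a * B)) = (\<Sum>a<n. \<Sum>i<d. \<Sum>j<d. M a $$ (i,j) * B $$ (j,i))"
    using B by (intro sum.cong refl) (simp add: mtrace_mult)
  also have "\<dots> = (\<Sum>i<d. \<Sum>j<d. \<Sum>a<n. M a $$ (i,j) * B $$ (j,i))"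
    by (rule sum.swap[THEN trans], rule sum.cong[OF refl], rule sum.swap)
  also have "\<dots> = (\<Sum>i<d. \<Sum>j<d. (1\<^sub>m d :: complex mat) $$ (i,j) * B $$ (j,i))"
    using M unfolding povm_def by (intro sum.cong refl) (simp add: sum_distrib_right[symmetric])
  also have "\<dots> = mtrace B"
    unfolding mtrace_mult[OF one_carrier_mat B, symmetric] using B by simp
  finally show ?thesis .
qed

lemma instrument_response_distribution:
  assumes L: "instrument d mX L" and \<sigma>: "density_op d \<sigma>"
    and Y: "\<forall>a<nA. \<forall>x<mX. povm d n (\<lambda>a'. Y a' a x)"
    and pA: "\<forall>x<mX. (\<forall>a<nA. 0 \<le> pA a x) \<and> (\<Sum>a<nA. pA a x) = 1"
  defines "R a' \<equiv> \<Sum>a<nA. \<Sum>x<mX. Re (mtrace (Y a' a x * L x \<sigma>)) * pA a x"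
  shows "(\<forall>a'<n. 0 \<le> R a') \<and> (\<Sum>a'<n. R a') = 1"
proof
  have L_psd: "psd_op d (L x \<sigma>)" if "x < mX" for x
    using L that \<sigma> cp_map_psd by (auto simp: instrument_def density_op_def)
  have "0 \<le> Re (mtrace (Y a' a x * L x \<sigma>))" if "a' < n" "a < nA" "x < mX" for a' a x
    using mtrace_mult_psd_nonneg[of d "Y a' a x" "L x \<sigma>"] Y L_psd that
    by (simp add: povm_def less_eq_complex_def)
  then show "\<forall>a'<n. 0 \<le> R a'"
    unfolding R_def using pA by (auto intro!: sum_nonneg mult_nonneg_nonneg)
next
  have \<sigma>_carrier: "\<sigma> \<in> carrier_mat d d"
    using \<sigma> by (rule density_op_carrier)
  have L_psd: "psd_op d (L x \<sigma>)" if "x < mX" for x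
    using L that \<sigma> cp_map_psd by (auto simp: instrument_def density_op_def)
  have "(\<Sum>a'<n. R a') = (\<Sum>a<nA. \<Sum>x<mX. Re (\<Sum>a'<n. mtrace (Y a' a x * L x \<sigma>)) * pA a x)"
    unfolding R_def by (simp add: sum_distrib_right sum.swap[of _ "{..<n}"])
  also have "\<dots> = (\<Sum>a<nA. \<Sum>x<mX. Re (mtrace (L x \<sigma>)) * pA a x)"
  proof (intro sum.cong refl)
    fix a x
    assume "a \<in> {..<nA}" "x \<in> {..<mX}"
    then have "(\<Sum>a'<n. mtrace (Y a' a x * L x \<sigma>)) = mtrace (L x \<sigma>)"
      using Y L_psd by (intro mtrace_povm_mult_sum) (auto intro: psd_op_carrier)
    then show "Re (\<Sum>a'<n. mtrace (Y a' a x * L x \<sigma>)) * pA a x = Re (mtrace (L x \<sigma>)) * pA a x"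
      by simp
  qed
  also have "\<dots> = (\<Sum>x<mX. Re (mtrace (L x \<sigma>)) * (\<Sum>a<nA. pA a x))"
    by (subst sum.swap) (simp add: sum_distrib_left)
  also have "\<dots> = Re (\<Sum>x<mX. mtrace (L x \<sigma>))"
    using pA by simp
  also have "\<dots> = 1"
    using L \<sigma> \<sigma>_carrier by (simp add: instrument_def density_op_def)
  finally show "(\<Sum>a'<n. R a') = 1" .
qed

lemma sum_swap_out:
  "(\<Sum>i\<in>I. \<Sum>j\<in>J. \<Sum>k\<in>K. \<Sum>l\<in>L. \<Sum>s\<in>S. g i j k l s)
    = (\<Sum>s\<in>S. \<Sum>i\<in>I. \<Sum>j\<in>J. \<Sum>k\<in>K. \<Sum>l\<in>L. (g i j k l s :: 'a::comm_monoid_add))"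
  by (simp only: sum.swap[of _ S])

lemma sum_swap_quad:
  "(\<Sum>i\<in>A. \<Sum>j\<in>B. \<Sum>k\<in>C. \<Sum>l\<in>D. \<Sum>p\<in>E. \<Sum>q\<in>F. \<Sum>s\<in>G. \<Sum>t\<in>H. g i j k l p q s t)
    = (\<Sum>p\<in>E. \<Sum>q\<in>F. \<Sum>s\<in>G. \<Sum>t\<in>H. \<Sum>i\<in>A. \<Sum>j\<in>B. \<Sum>k\<in>C. \<Sum>l\<in>D.
        (g i j k l p q s t :: 'a::comm_monoid_add))"
proof -
  let ?P = "E \<times> F \<times> G \<times> H"
  have quad: "(\<Sum>p\<in>E. \<Sum>q\<in>F. \<Sum>s\<in>G. \<Sum>t\<in>H. f p q s t)
      = (\<Sum>z\<in>?P. f (fst z) (fst (snd z)) (fst (snd (snd z))) (snd (snd (snd z))))"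
    for f :: "_ \<Rightarrow> _ \<Rightarrow> _ \<Rightarrow> _ \<Rightarrow> 'a"
    by (simp add: sum.cartesian_product case_prod_beta)
  have "(\<Sum>i\<in>A. \<Sum>j\<in>B. \<Sum>k\<in>C. \<Sum>l\<in>D. \<Sum>p\<in>E. \<Sum>q\<in>F. \<Sum>s\<in>G. \<Sum>t\<in>H. g i j k l p q s t)
      = (\<Sum>i\<in>A. \<Sum>j\<in>B. \<Sum>k\<in>C. \<Sum>l\<in>D. \<Sum>z\<in>?P.
          g i j k l (fst z) (fst (snd z)) (fst (snd (snd z))) (snd (snd (snd z))))"
    by (simp only: quad)
  also have "\<dots> = (\<Sum>z\<in>?P. \<Sum>i\<in>A. \<Sum>j\<in>B. \<Sum>k\<in>C. \<Sum>l\<in>D.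
      g i j k l (fst z) (fst (snd z)) (fst (snd (snd z))) (snd (snd (snd z))))"
    by (rule sum_swap_out)
  also have "\<dots> = (\<Sum>p\<in>E. \<Sum>q\<in>F. \<Sum>s\<in>G. \<Sum>t\<in>H. \<Sum>i\<in>A. \<Sum>j\<in>B. \<Sum>k\<in>C. \<Sum>l\<in>D. g i j k l p q s t)"
    by (rule quad[of "\<lambda>p q s t. \<Sum>i\<in>A. \<Sum>j\<in>B. \<Sum>k\<in>C. \<Sum>l\<in>D. g i j k l p q s t", symmetric])
  finally show ?thesis .
qed

text \<open>The trace \<open>tr ((P \<otimes> Q) X)\<close> in coordinates, for the entry functions \<open>p\<close> of \<open>P\<close> (of size
  \<open>n\<close>), \<open>q\<close> of \<open>Q\<close> (of size \<open>m\<close>) and \<open>X\<close>; unlike the matrix expression it is visibly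
  bilinear in \<open>p, q\<close> and linear in \<open>X\<close>.\<close>

definition kron_pairing :: "nat \<Rightarrow> nat \<Rightarrow> (nat \<Rightarrow> nat \<Rightarrow> complex) \<Rightarrow> (nat \<Rightarrow> nat \<Rightarrow> complex)
    \<Rightarrow> (nat \<Rightarrow> nat \<Rightarrow> complex) \<Rightarrow> complex" where
  "kron_pairing m n p q X = (\<Sum>i<n. \<Sum>j<n. \<Sum>k<m. \<Sum>l<m. p i j * q k l * X (j * m + l) (i * m + k))"

lemma kron_pairing_cong:
  "(\<And>i j. i < n \<Longrightarrow> j < n \<Longrightarrow> p i j = p' i j) \<Longrightarrow> (\<And>k l. k < m \<Longrightarrow> l < m \<Longrightarrow> q k l = q' k l)
    \<Longrightarrow> (\<And>r c. r < n * m \<Longrightarrow> c < n * m \<Longrightarrow> X r c = X' r c)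
    \<Longrightarrow> kron_pairing m n p q X = kron_pairing m n p' q' X'"
  unfolding kron_pairing_def by (intro sum.cong refl) (simp add: mult_add_less_mult)

lemma kron_pairing_sum:
  "kron_pairing m n (\<lambda>i j. \<Sum>s\<in>S. p s i j) (\<lambda>k l. \<Sum>t\<in>T. q t k l) X
    = (\<Sum>s\<in>S. \<Sum>t\<in>T. kron_pairing m n (p s) (q t) X)"
proof -
  have "kron_pairing m n (\<lambda>i j. \<Sum>s\<in>S. p s i j) (\<lambda>k l. \<Sum>t\<in>T. q t k l) X =
      (\<Sum>i<n. \<Sum>j<n. \<Sum>k<m. \<Sum>l<m. \<Sum>t\<in>T. \<Sum>s\<in>S. p s i j * q t k l * X (j * m + l) (i * m + k))"
    unfolding kron_pairing_def by (simp only: sum_distrib_left sum_distrib_right)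
  also have "\<dots> = (\<Sum>t\<in>T. \<Sum>i<n. \<Sum>j<n. \<Sum>k<m. \<Sum>l<m. \<Sum>s\<in>S. p s i j * q t k l * X (j * m + l) (i * m + k))"
    by (rule sum_swap_out)
  also have "\<dots> = (\<Sum>t\<in>T. \<Sum>s\<in>S. \<Sum>i<n. \<Sum>j<n. \<Sum>k<m. \<Sum>l<m. p s i j * q t k l * X (j * m + l) (i * m + k))"
    by (rule sum.cong[OF refl], rule sum_swap_out)
  also have "\<dots> = (\<Sum>s\<in>S. \<Sum>t\<in>T. kron_pairing m n (p s) (q t) X)"
    unfolding kron_pairing_def by (rule sum.swap)
  finally show ?thesis .
qed

lemma kron_pairing_sum_right:
  "kron_pairing m n p q (\<lambda>r c. \<Sum>s\<in>S. z s * X s r c) = (\<Sum>s\<in>S. z s * kron_pairing m n p q (X s))"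
proof -
  have "kron_pairing m n p q (\<lambda>r c. \<Sum>s\<in>S. z s * X s r c)
      = (\<Sum>i<n. \<Sum>j<n. \<Sum>k<m. \<Sum>l<m. \<Sum>s\<in>S. z s * (p i j * q k l * X s (j * m + l) (i * m + k)))"
    unfolding kron_pairing_def by (simp add: sum_distrib_left mult_ac)
  also have "\<dots> = (\<Sum>s\<in>S. \<Sum>i<n. \<Sum>j<n. \<Sum>k<m. \<Sum>l<m. z s * (p i j * q k l * X s (j * m + l) (i * m + k)))"
    by (rule sum_swap_out)
  also have "\<dots> = (\<Sum>s\<in>S. z s * kron_pairing m n p q (X s))"
    unfolding kron_pairing_def by (simp add: sum_distrib_left)
  finally show ?thesis .
qed

lemma mtrace_kron_mult:
  assumes "P \<in> carrier_mat n n" "Q \<in> carrier_mat m m" "X \<in> carrier_mat (n * m) (n * m)"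
  shows "mtrace (kron P Q * X) = kron_pairing m n (\<lambda>i j. P $$ (i,j)) (\<lambda>k l. Q $$ (k,l)) (\<lambda>r c. X $$ (r,c))"
proof -
  have "mtrace (kron P Q * X) = (\<Sum>r<n * m. \<Sum>c<n * m. kron P Q $$ (r,c) * X $$ (c,r))"
    using assms kron_carrier by (simp add: mtrace_mult)
  also have "\<dots> = (\<Sum>i<n. \<Sum>k<m. \<Sum>j<n. \<Sum>l<m. P $$ (i,j) * Q $$ (k,l) * X $$ (j * m + l, i * m + k))"
    unfolding sum_lessThan_mult using assms by (simp add: kron_index_mult_add)
  also have "\<dots> = kron_pairing m n (\<lambda>i j. P $$ (i,j)) (\<lambda>k l. Q $$ (k,l)) (\<lambda>r c. X $$ (r,c))"
    unfolding kron_pairing_def by (intro sum.cong refl sum.swap)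
  finally show ?thesis .
qed

lemma kron_pairing_kron:
  assumes "A \<in> carrier_mat n n" "B \<in> carrier_mat m m"
  shows "kron_pairing m n p q (\<lambda>r c. kron A B $$ (r,c))
    = (\<Sum>i<n. \<Sum>j<n. p i j * A $$ (j,i)) * (\<Sum>k<m. \<Sum>l<m. q k l * B $$ (l,k))"
proof -
  have "kron_pairing m n p q (\<lambda>r c. kron A B $$ (r,c))
      = (\<Sum>i<n. \<Sum>j<n. \<Sum>k<m. \<Sum>l<m. (p i j * A $$ (j,i)) * (q k l * B $$ (l,k)))"
    unfolding kron_pairing_def using assms by (intro sum.cong refl) (simp add: kron_index_mult_add)
  also have "\<dots> = (\<Sum>i<n. \<Sum>j<n. p i j * A $$ (j,i)) * (\<Sum>k<m. \<Sum>l<m. q k l * B $$ (l,k))"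
    by (simp only: sum_distrib_right, simp only: sum_distrib_left)
  finally show ?thesis .
qed

lemma kron_pairing_cut_tensor:
  assumes "X \<in> carrier_mat (dA * dB) (dA * dB)" "\<tau> \<in> carrier_mat (dC * dD) (dC * dD)"
  shows "kron_pairing (dB * dD) (dA * dC) (\<lambda>R R'. a (R div dC) (R' div dC) * c (R mod dC) (R' mod dC))
      (\<lambda>S S'. b (S div dD) (S' div dD) * d (S mod dD) (S' mod dD)) (\<lambda>r s. cut_tensor dA dB dC dD X \<tau> $$ (r,s))
    = kron_pairing dB dA a b (\<lambda>r s. X $$ (r,s)) * kron_pairing dD dC c d (\<lambda>r s. \<tau> $$ (r,s))"
proof -
  have "kron_pairing (dB * dD) (dA * dC) (\<lambda>R R'. a (R div dC) (R' div dC) * c (R mod dC) (R' mod dC))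
      (\<lambda>S S'. b (S div dD) (S' div dD) * d (S mod dD) (S' mod dD)) (\<lambda>r s. cut_tensor dA dB dC dD X \<tau> $$ (r,s))
    = (\<Sum>\<alpha><dA. \<Sum>\<gamma><dC. \<Sum>\<alpha>'<dA. \<Sum>\<gamma>'<dC. \<Sum>\<beta><dB. \<Sum>\<delta><dD. \<Sum>\<beta>'<dB. \<Sum>\<delta>'<dD.
        (a \<alpha> \<alpha>' * b \<beta> \<beta>' * X $$ (\<alpha>' * dB + \<beta>', \<alpha> * dB + \<beta>))
        * (c \<gamma> \<gamma>' * d \<delta> \<delta>' * \<tau> $$ (\<gamma>' * dD + \<delta>', \<gamma> * dD + \<delta>)))"
    unfolding kron_pairing_def sum_lessThan_mult
    by (simp add: cut_tensor_index mult_add_less_mult ab_cd_index_split, simp add: mult_ac)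
  also have "\<dots> = kron_pairing dB dA a b (\<lambda>r s. X $$ (r,s)) * kron_pairing dD dC c d (\<lambda>r s. \<tau> $$ (r,s))"
    unfolding kron_pairing_def by (simp only: sum_product_interleave)
  finally show ?thesis .
qed

lemma map_tensor_carrier: "map_tensor d1 d2 d1' d2' L1 L2 X \<in> carrier_mat (d1' * d2') (d1' * d2')"
  unfolding map_tensor_def by simp

lemma mtrace_kron_map_tensor:
  assumes LA: "lin_map dC dC LA" and LB: "lin_map dD dD LB"
    and M: "M \<in> carrier_mat dC dC" and N: "N \<in> carrier_mat dD dD" and \<tau>: "\<tau> \<in> carrier_mat (dC * dD) (dC * dD)"
  shows "mtrace (kron M N * map_tensor dC dD dC dD LA LB \<tau>) = mtrace (kron (dual_map dC LA M) (dual_map dD LB N) * \<tau>)"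
proof -
  let ?T = "map_tensor dC dD dC dD LA LB \<tau>"
  let ?f = "\<lambda>i j k l p q s t. (M $$ (i,j) * N $$ (k,l))
    * (\<tau> $$ (p * dD + s, q * dD + t) * LA (eunit dC p q) $$ (j,i) * LB (eunit dD s t) $$ (l,k))"
  have "mtrace (kron M N * ?T) = kron_pairing dD dC (\<lambda>i j. M $$ (i,j)) (\<lambda>k l. N $$ (k,l)) (\<lambda>r c. ?T $$ (r,c))"
    by (rule mtrace_kron_mult[OF M N map_tensor_carrier])
  also have "\<dots> = (\<Sum>i<dC. \<Sum>j<dC. \<Sum>k<dD. \<Sum>l<dD. \<Sum>p<dC. \<Sum>q<dC. \<Sum>s<dD. \<Sum>t<dD. ?f i j k l p q s t)"
    unfolding kron_pairing_def by (simp add: map_tensor_def mult_add_less_mult sum_distrib_left)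
  also have "\<dots> = (\<Sum>p<dC. \<Sum>q<dC. \<Sum>s<dD. \<Sum>t<dD. \<Sum>i<dC. \<Sum>j<dC. \<Sum>k<dD. \<Sum>l<dD. ?f i j k l p q s t)"
    by (rule sum_swap_quad)
  also have "\<dots> = (\<Sum>p<dC. \<Sum>q<dC. \<Sum>s<dD. \<Sum>t<dD. \<tau> $$ (p * dD + s, q * dD + t)
      * (\<Sum>i<dC. \<Sum>j<dC. M $$ (i,j) * LA (eunit dC p q) $$ (j,i))
      * (\<Sum>k<dD. \<Sum>l<dD. N $$ (k,l) * LB (eunit dD s t) $$ (l,k)))"
    by (intro sum.cong refl) (simp add: sum_distrib_left sum_distrib_right mult_ac)
  also have "\<dots> = (\<Sum>p<dC. \<Sum>q<dC. \<Sum>s<dD. \<Sum>t<dD.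
      dual_map dC LA M $$ (q,p) * dual_map dD LB N $$ (t,s) * \<tau> $$ (p * dD + s, q * dD + t))"
    by (intro sum.cong refl) (simp add: dual_map_def mult_ac)
  also have "\<dots> = (\<Sum>q<dC. \<Sum>p<dC. \<Sum>t<dD. \<Sum>s<dD.
      dual_map dC LA M $$ (q,p) * dual_map dD LB N $$ (t,s) * \<tau> $$ (p * dD + s, q * dD + t))"
    by (subst sum.swap) (intro sum.cong refl sum.swap)
  also have "\<dots> = mtrace (kron (dual_map dC LA M) (dual_map dD LB N) * \<tau>)"
    unfolding mtrace_kron_mult[OF dual_map_carrier dual_map_carrier \<tau>] kron_pairing_def ..
  finally show ?thesis .
qed

lemma mtrace_kron_dual_map_nonneg:
  assumes LA: "cp_map dC dC LA" and LB: "cp_map dD dD LB"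
    and M: "psd_op dC M" and N: "psd_op dD N" and \<tau>: "psd_op (dC * dD) \<tau>"
  shows "0 \<le> mtrace (kron (dual_map dC LA M) (dual_map dD LB N) * \<tau>)"
proof -
  have "psd_op (dC * dD) (kron (dual_map dC LA M) (dual_map dD LB N))"
    by (intro psd_op_kron dual_map_psd LA LB M N)
  then show ?thesis
    using \<tau> psd_form_trace_nonneg mtrace_mult[OF kron_carrier[OF dual_map_carrier dual_map_carrier]
        psd_op_carrier[OF \<tau>]]
    by (simp add: psd_op_iff_psd_form)
qed

lemma mtrace_kron_dual_map_separable:
  assumes LA: "lin_map dC dC LA" and LB: "lin_map dD dD LB"
    and M: "M \<in> carrier_mat dC dC" and N: "N \<in> carrier_mat dD dD"
    and \<sigma>C: "\<And>j. j < n \<Longrightarrow> \<sigma>C j \<in> carrier_mat dC dC" and \<sigma>D: "\<And>j. j < n \<Longrightarrow> \<sigma>D j \<in> carrier_mat dD dD"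
  shows "mtrace (kron (dual_map dC LA M) (dual_map dD LB N) *
      mat (dC * dD) (dC * dD) (\<lambda>(r,c). \<Sum>j<n. complex_of_real (q j) * kron (\<sigma>C j) (\<sigma>D j) $$ (r,c)))
    = (\<Sum>j<n. complex_of_real (q j) * (mtrace (M * LA (\<sigma>C j)) * mtrace (N * LB (\<sigma>D j))))"
proof -
  let ?p = "\<lambda>i j. dual_map dC LA M $$ (i,j)" and ?q = "\<lambda>k l. dual_map dD LB N $$ (k,l)"
  have "mtrace (kron (dual_map dC LA M) (dual_map dD LB N) *
      mat (dC * dD) (dC * dD) (\<lambda>(r,c). \<Sum>j<n. complex_of_real (q j) * kron (\<sigma>C j) (\<sigma>D j) $$ (r,c)))
    = kron_pairing dD dC ?p ?q (\<lambda>r c. \<Sum>j<n. complex_of_real (q j) * kron (\<sigma>C j) (\<sigma>D j) $$ (r,c))"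
    by (subst mtrace_kron_mult[OF dual_map_carrier dual_map_carrier]) (auto intro: kron_pairing_cong)
  also have "\<dots> = (\<Sum>j<n. complex_of_real (q j) * kron_pairing dD dC ?p ?q (\<lambda>r c. kron (\<sigma>C j) (\<sigma>D j) $$ (r,c)))"
    by (rule kron_pairing_sum_right)
  also have "\<dots> = (\<Sum>j<n. complex_of_real (q j) * (mtrace (M * LA (\<sigma>C j)) * mtrace (N * LB (\<sigma>D j))))"
    using \<sigma>C \<sigma>D M N
    by (intro sum.cong refl) (simp add: kron_pairing_kron dual_map_trace[OF LA] dual_map_trace[OF LB]
        mtrace_mult lin_map_carrier[OF LA] lin_map_carrier[OF LB])
  finally show ?thesis .
qed

section \<open>Wired measurements\<close>

text \<open>Alice's effective POVM element on \<open>A \<otimes> C\<close> for a final outcome: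
  \<open>\<Sum>\<^sub>a\<^sub>,\<^sub>x M\<^sub>a\<^sub>|\<^sub>x \<otimes> L\<^sub>x\<^sup>*(Y\<^sub>a\<^sub>,\<^sub>x)\<close>, where \<open>L\<close> is the instrument applied before the box and
  \<open>Y\<close> the POVM element measured after it.\<close>

definition wired_povm :: "nat \<Rightarrow> nat \<Rightarrow> nat \<Rightarrow> nat \<Rightarrow> (nat \<Rightarrow> nat \<Rightarrow> complex mat)
    \<Rightarrow> (nat \<Rightarrow> complex mat \<Rightarrow> complex mat) \<Rightarrow> (nat \<Rightarrow> nat \<Rightarrow> complex mat) \<Rightarrow> complex mat" where
  "wired_povm dA dC nA mX M L Y = mat (dA * dC) (dA * dC) (\<lambda>(R,R'). \<Sum>a<nA. \<Sum>x<mX.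
      M x a $$ (R div dC, R' div dC) * dual_map dC (L x) (Y a x) $$ (R mod dC, R' mod dC))"

lemma wired_povm_carrier: "wired_povm dA dC nA mX M L Y \<in> carrier_mat (dA * dC) (dA * dC)"
  unfolding wired_povm_def by simp

lemma wired_povm_psd:
  assumes M: "\<And>x a. x < mX \<Longrightarrow> a < nA \<Longrightarrow> psd_op dA (M x a)"
    and L: "\<And>x. x < mX \<Longrightarrow> cp_map dC dC (L x)"
    and Y: "\<And>a x. a < nA \<Longrightarrow> x < mX \<Longrightarrow> psd_op dC (Y a x)"
  shows "psd_op (dA * dC) (wired_povm dA dC nA mX M L Y)"
proof -
  have "psd_form (dA * dC) (\<lambda>R R'. M x a $$ (R div dC, R' div dC) * dual_map dC (L x) (Y a x) $$ (R mod dC, R' mod dC))"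
    if "a < nA" "x < mX" for a x
  proof (rule psd_form_schur_product)
    have "psd_form dA (\<lambda>i j. M x a $$ (i,j))" using M that psd_op_iff_psd_form by auto
    then show "psd_form (dA * dC) (\<lambda>R R'. M x a $$ (R div dC, R' div dC))"
      by (rule psd_form_reindex) (simp add: less_mult_imp_div_less)
    have "psd_form dC (\<lambda>i j. dual_map dC (L x) (Y a x) $$ (i,j))"
      using dual_map_psd[OF L Y] that psd_op_iff_psd_form by auto
    then show "psd_form (dA * dC) (\<lambda>R R'. dual_map dC (L x) (Y a x) $$ (R mod dC, R' mod dC))"
      by (rule psd_form_reindex) (simp add: less_mult_imp_mod_less)
  qed
  then have "psd_form (dA * dC) (\<lambda>R R'. \<Sum>a<nA. \<Sum>x<mX.
      M x a $$ (R div dC, R' div dC) * dual_map dC (L x) (Y a x) $$ (R mod dC, R' mod dC))"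
    by (intro psd_form_sum) simp
  then have "psd_form (dA * dC) (\<lambda>i j. wired_povm dA dC nA mX M L Y $$ (i,j))"
    by (subst psd_form_cong) (auto simp: wired_povm_def)
  then show ?thesis using wired_povm_carrier psd_op_iff_psd_form by blast
qed

lemma one_mat_index_div_mod:
  assumes "R < m * n" "R' < m * n"
  shows "(1\<^sub>m m :: complex mat) $$ (R div n, R' div n) * (1\<^sub>m n :: complex mat) $$ (R mod n, R' mod n)
    = (1\<^sub>m (m * n) :: complex mat) $$ (R,R')"
proof (cases "R = R'")
  case True
  then show ?thesis using assms by (simp add: less_mult_imp_div_less less_mult_imp_mod_less)
next
  case False
  then have "R div n \<noteq> R' div n \<or> R mod n \<noteq> R' mod n" by (metis div_mult_mod_eq)
  then show ?thesis using assms False by (auto simp: less_mult_imp_div_less less_mult_imp_mod_less)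
qed

lemma wired_povm_povm:
  assumes M: "\<forall>x<mX. povm dA nA (M x)" and I: "instrument dC mX L"
    and Y: "\<forall>a<nA. \<forall>x<mX. povm dC n (\<lambda>a'. Y a' a x)"
  shows "povm (dA * dC) n (\<lambda>a'. wired_povm dA dC nA mX M L (Y a'))"
  unfolding povm_def
proof (intro conjI allI impI)
  fix a'
  assume "a' < n"
  then show "psd_op (dA * dC) (wired_povm dA dC nA mX M L (Y a'))"
    using M I Y by (intro wired_povm_psd) (auto simp: povm_def instrument_def)
next
  fix R R'
  assume R: "R < dA * dC" and R': "R' < dA * dC"
  then have dR: "R div dC < dA" "R' div dC < dA" "R mod dC < dC" "R' mod dC < dC"
    by (simp_all add: less_mult_imp_div_less less_mult_imp_mod_less)
  have "(\<Sum>a'<n. wired_povm dA dC nA mX M L (Y a') $$ (R,R'))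
      = (\<Sum>a<nA. \<Sum>x<mX. M x a $$ (R div dC, R' div dC)
          * (\<Sum>a'<n. dual_map dC (L x) (Y a' a x) $$ (R mod dC, R' mod dC)))"
    using R R' by (simp add: wired_povm_def sum_distrib_left sum.swap[of _ "{..<n}"])
  also have "\<dots> = (\<Sum>x<mX. (\<Sum>a<nA. M x a $$ (R div dC, R' div dC))
      * dual_map dC (L x) (1\<^sub>m dC) $$ (R mod dC, R' mod dC))"
  proof -
    have "(\<Sum>a'<n. dual_map dC (L x) (Y a' a x) $$ (R mod dC, R' mod dC))
        = dual_map dC (L x) (1\<^sub>m dC) $$ (R mod dC, R' mod dC)" if "a < nA" "x < mX" for a x
      using Y that dR by (intro dual_map_sum_index) (auto simp: povm_def)
    then show ?thesis by (subst sum.swap) (simp add: sum_distrib_right)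
  qed
  also have "\<dots> = (1\<^sub>m dA :: complex mat) $$ (R div dC, R' div dC)
      * (\<Sum>x<mX. dual_map dC (L x) (1\<^sub>m dC) $$ (R mod dC, R' mod dC))"
    using M dR by (simp add: povm_def sum_distrib_left)
  also have "\<dots> = (1\<^sub>m dA :: complex mat) $$ (R div dC, R' div dC) * (1\<^sub>m dC :: complex mat) $$ (R mod dC, R' mod dC)"
    using instrument_dual_map_unital[OF I dR(3,4)] by simp
  also have "\<dots> = (1\<^sub>m (dA * dC) :: complex mat) $$ (R,R')"
    using R R' by (rule one_mat_index_div_mod)
  finally show "(\<Sum>a'<n. wired_povm dA dC nA mX M L (Y a') $$ (R,R')) = (1\<^sub>m (dA * dC) :: complex mat) $$ (R,R')" .
qed

lemma mtrace_wired_povm_cut_tensor: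
  assumes M: "\<And>x a. x < mX \<Longrightarrow> a < nA \<Longrightarrow> M x a \<in> carrier_mat dA dA"
    and N: "\<And>y b. y < mY \<Longrightarrow> b < nB \<Longrightarrow> N y b \<in> carrier_mat dB dB"
    and X: "X \<in> carrier_mat (dA * dB) (dA * dB)" and \<tau>: "\<tau> \<in> carrier_mat (dC * dD) (dC * dD)"
  shows "mtrace (kron (wired_povm dA dC nA mX M L Y) (wired_povm dB dD nB mY N K Z) * cut_tensor dA dB dC dD X \<tau>)
    = (\<Sum>a<nA. \<Sum>b<nB. \<Sum>x<mX. \<Sum>y<mY. mtrace (kron (M x a) (N y b) * X)
        * mtrace (kron (dual_map dC (L x) (Y a x)) (dual_map dD (K y) (Z b y)) * \<tau>))"
proof -
  let ?SA = "{..<nA} \<times> {..<mX}" and ?SB = "{..<nB} \<times> {..<mY}"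
  define fa where "fa s = (\<lambda>i j. M (snd s) (fst s) $$ (i,j))" for s :: "nat \<times> nat"
  define fc where "fc s = (\<lambda>i j. dual_map dC (L (snd s)) (Y (fst s) (snd s)) $$ (i,j))" for s :: "nat \<times> nat"
  define fb where "fb t = (\<lambda>i j. N (snd t) (fst t) $$ (i,j))" for t :: "nat \<times> nat"
  define fd where "fd t = (\<lambda>i j. dual_map dD (K (snd t)) (Z (fst t) (snd t)) $$ (i,j))" for t :: "nat \<times> nat"
  have "mtrace (kron (wired_povm dA dC nA mX M L Y) (wired_povm dB dD nB mY N K Z) * cut_tensor dA dB dC dD X \<tau>)
      = kron_pairing (dB * dD) (dA * dC) (\<lambda>i j. wired_povm dA dC nA mX M L Y $$ (i,j))
          (\<lambda>k l. wired_povm dB dD nB mY N K Z $$ (k,l)) (\<lambda>r c. cut_tensor dA dB dC dD X \<tau> $$ (r,c))"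
    by (rule mtrace_kron_mult[OF wired_povm_carrier wired_povm_carrier cut_tensor_carrier])
  also have "\<dots> = kron_pairing (dB * dD) (dA * dC)
      (\<lambda>R R'. \<Sum>s\<in>?SA. fa s (R div dC) (R' div dC) * fc s (R mod dC) (R' mod dC))
      (\<lambda>S S'. \<Sum>t\<in>?SB. fb t (S div dD) (S' div dD) * fd t (S mod dD) (S' mod dD))
      (\<lambda>r c. cut_tensor dA dB dC dD X \<tau> $$ (r,c))"
    by (rule kron_pairing_cong)
      (simp_all add: wired_povm_def fa_def fb_def fc_def fd_def sum.cartesian_product case_prod_beta)
  also have "\<dots> = (\<Sum>s\<in>?SA. \<Sum>t\<in>?SB. kron_pairing dB dA (fa s) (fb t) (\<lambda>r c. X $$ (r,c))
      * kron_pairing dD dC (fc s) (fd t) (\<lambda>r c. \<tau> $$ (r,c)))"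
    unfolding kron_pairing_sum using kron_pairing_cut_tensor[OF X \<tau>] by simp
  also have "\<dots> = (\<Sum>s\<in>?SA. \<Sum>t\<in>?SB. mtrace (kron (M (snd s) (fst s)) (N (snd t) (fst t)) * X)
      * mtrace (kron (dual_map dC (L (snd s)) (Y (fst s) (snd s))) (dual_map dD (K (snd t)) (Z (fst t) (snd t))) * \<tau>))"
    unfolding fa_def fb_def fc_def fd_def
    by (intro sum.cong refl)
      (auto simp: mtrace_kron_mult[OF M N X] mtrace_kron_mult[OF dual_map_carrier dual_map_carrier \<tau>])
  also have "\<dots> = (\<Sum>a<nA. \<Sum>x<mX. \<Sum>b<nB. \<Sum>y<mY. mtrace (kron (M x a) (N y b) * X)
      * mtrace (kron (dual_map dC (L x) (Y a x)) (dual_map dD (K y) (Z b y)) * \<tau>))"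
    by (simp add: sum.cartesian_product')
  also have "\<dots> = (\<Sum>a<nA. \<Sum>b<nB. \<Sum>x<mX. \<Sum>y<mY. mtrace (kron (M x a) (N y b) * X)
      * mtrace (kron (dual_map dC (L x) (Y a x)) (dual_map dD (K y) (Z b y)) * \<tau>))"
    by (intro sum.cong refl sum.swap)
  finally show ?thesis .
qed

section \<open>Linear maps of boxes and robustness\<close>

lemma local_box_double_sum:
  fixes n1 n2 :: nat and Q :: "nat \<Rightarrow> nat \<Rightarrow> real"
  assumes Q: "\<forall>i<n1. \<forall>j<n2. 0 \<le> Q i j" "(\<Sum>i<n1. \<Sum>j<n2. Q i j) = 1"
    and PA: "\<forall>i<n1. \<forall>j<n2. \<forall>x<mX. (\<forall>a<nA. 0 \<le> PA i j a x) \<and> (\<Sum>a<nA. PA i j a x) = 1"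
    and PB: "\<forall>i<n1. \<forall>j<n2. \<forall>y<mY. (\<forall>b<nB. 0 \<le> PB i j b y) \<and> (\<Sum>b<nB. PB i j b y) = 1"
    and p: "\<forall>a<nA. \<forall>b<nB. \<forall>x<mX. \<forall>y<mY. p a b x y = (\<Sum>i<n1. \<Sum>j<n2. Q i j * PA i j a x * PB i j b y)"
  shows "local_box nA nB mX mY p"
proof -
  have k: "k div n2 < n1" "k mod n2 < n2" if "k < n1 * n2" for k
    using that by (simp_all add: less_mult_imp_div_less less_mult_imp_mod_less)
  define Q' where "Q' k = Q (k div n2) (k mod n2)" for k
  define PA' where "PA' k = PA (k div n2) (k mod n2)" for k
  define PB' where "PB' k = PB (k div n2) (k mod n2)" for k
  have "\<forall>k<n1 * n2. 0 \<le> Q' k" "(\<Sum>k<n1 * n2. Q' k) = 1"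
    using Q k by (simp_all add: Q'_def sum_lessThan_mult)
  moreover have "\<forall>k<n1 * n2. \<forall>x<mX. (\<forall>a<nA. 0 \<le> PA' k a x) \<and> (\<Sum>a<nA. PA' k a x) = 1"
    "\<forall>k<n1 * n2. \<forall>y<mY. (\<forall>b<nB. 0 \<le> PB' k b y) \<and> (\<Sum>b<nB. PB' k b y) = 1"
    using PA PB k by (simp_all add: PA'_def PB'_def)
  moreover have "\<forall>a<nA. \<forall>b<nB. \<forall>x<mX. \<forall>y<mY. p a b x y = (\<Sum>k<n1 * n2. Q' k * PA' k a x * PB' k b y)"
    using p by (simp add: Q'_def PA'_def PB'_def sum_lessThan_mult)
  ultimately show ?thesis unfolding local_box_def by blast
qed

lemma sum_mixture_product:
  fixes q1 q2 :: "nat \<Rightarrow> real" and \<alpha> \<beta> pA pB :: "nat \<Rightarrow> nat \<Rightarrow> nat \<Rightarrow> real"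
  shows "(\<Sum>a<nA. \<Sum>b<nB. \<Sum>x<mX. \<Sum>y<mY.
      (\<Sum>j<n2. q2 j * (\<alpha> j a x * \<beta> j b y)) * (\<Sum>i<n1. q1 i * pA i a x * pB i b y))
    = (\<Sum>i<n1. \<Sum>j<n2. (q1 i * q2 j) * (\<Sum>a<nA. \<Sum>x<mX. \<alpha> j a x * pA i a x)
        * (\<Sum>b<nB. \<Sum>y<mY. \<beta> j b y * pB i b y))"
proof -
  define G where "G a b x y i j = (q1 i * q2 j) * ((\<alpha> j a x * pA i a x) * (\<beta> j b y * pB i b y))" for a b x y i j
  have "(\<Sum>a<nA. \<Sum>b<nB. \<Sum>x<mX. \<Sum>y<mY.
      (\<Sum>j<n2. q2 j * (\<alpha> j a x * \<beta> j b y)) * (\<Sum>i<n1. q1 i * pA i a x * pB i b y))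
      = (\<Sum>a<nA. \<Sum>b<nB. \<Sum>x<mX. \<Sum>y<mY. \<Sum>i<n1. \<Sum>j<n2. G a b x y i j)"
    unfolding G_def by (intro sum.cong refl) (simp add: sum_product sum.swap[of _ "{..<n1}"] mult_ac)
  also have "\<dots> = (\<Sum>i<n1. \<Sum>a<nA. \<Sum>b<nB. \<Sum>x<mX. \<Sum>y<mY. \<Sum>j<n2. G a b x y i j)"
    by (rule sum_swap_out)
  also have "\<dots> = (\<Sum>i<n1. \<Sum>j<n2. \<Sum>a<nA. \<Sum>b<nB. \<Sum>x<mX. \<Sum>y<mY. G a b x y i j)"
    by (intro sum.cong refl sum_swap_out)
  also have "\<dots> = (\<Sum>i<n1. \<Sum>j<n2. \<Sum>a<nA. \<Sum>x<mX. \<Sum>b<nB. \<Sum>y<mY. G a b x y i j)"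
    by (intro sum.cong refl sum.swap)
  also have "\<dots> = (\<Sum>i<n1. \<Sum>j<n2. (q1 i * q2 j) * ((\<Sum>a<nA. \<Sum>x<mX. \<alpha> j a x * pA i a x)
        * (\<Sum>b<nB. \<Sum>y<mY. \<beta> j b y * pB i b y)))"
    unfolding G_def by (simp only: sum_distrib_right, simp only: sum_distrib_left)
  also have "\<dots> = (\<Sum>i<n1. \<Sum>j<n2. (q1 i * q2 j) * (\<Sum>a<nA. \<Sum>x<mX. \<alpha> j a x * pA i a x)
        * (\<Sum>b<nB. \<Sum>y<mY. \<beta> j b y * pB i b y))"
    by (simp only: mult.assoc)
  finally show ?thesis .
qed

definition box_map :: "nat \<Rightarrow> nat \<Rightarrow> nat \<Rightarrow> nat
    \<Rightarrow> (nat \<Rightarrow> nat \<Rightarrow> nat \<Rightarrow> nat \<Rightarrow> nat \<Rightarrow> nat \<Rightarrow> nat \<Rightarrow> nat \<Rightarrow> real)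
    \<Rightarrow> (nat \<Rightarrow> nat \<Rightarrow> nat \<Rightarrow> nat \<Rightarrow> real) \<Rightarrow> (nat \<Rightarrow> nat \<Rightarrow> nat \<Rightarrow> nat \<Rightarrow> real)" where
  "box_map nA nB mX mY K w a' b' x' y' = (\<Sum>a<nA. \<Sum>b<nB. \<Sum>x<mX. \<Sum>y<mY. K a' b' x' y' a b x y * w a b x y)"

lemma box_map_affine:
  "box_map nA nB mX mY K (\<lambda>a b x y. p a b x y + t * w a b x y) a' b' x' y'
    = box_map nA nB mX mY K p a' b' x' y' + t * box_map nA nB mX mY K w a' b' x' y'"
  unfolding box_map_def by (simp add: sum.distrib sum_distrib_left algebra_simps)

lemma box_map_cong:
  "(\<And>a b x y. a < nA \<Longrightarrow> b < nB \<Longrightarrow> x < mX \<Longrightarrow> y < mY \<Longrightarrow> p a b x y = w a b x y)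
    \<Longrightarrow> box_map nA nB mX mY K p a' b' x' y' = box_map nA nB mX mY K w a' b' x' y'"
  unfolding box_map_def by (intro sum.cong refl) auto

lemma box_robustness_box_map_le:
  assumes S: "\<And>w. S w \<Longrightarrow> S' (box_map nA nB mX mY K w)"
    and p': "\<forall>a'<nA'. \<forall>b'<nB'. \<forall>x'<mX'. \<forall>y'<mY'. p' a' b' x' y' = box_map nA nB mX mY K p a' b' x' y'"
  shows "box_robustness S' nA' nB' mX' mY' p' \<le> box_robustness S nA nB mX mY p"
  unfolding box_robustness_def
proof (rule Inf_superset_mono, rule image_mono, rule subsetI)
  fix t
  assume "t \<in> {t. t \<ge> 0 \<and> (\<exists>w u. S w \<and> S u \<and>
      (\<forall>a<nA. \<forall>b<nB. \<forall>x<mX. \<forall>y<mY. (p a b x y + t * w a b x y) / (1 + t) = u a b x y))}"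
  then obtain w u where t: "t \<ge> 0" and w: "S w" and u: "S u"
    and mix: "\<forall>a<nA. \<forall>b<nB. \<forall>x<mX. \<forall>y<mY. (p a b x y + t * w a b x y) / (1 + t) = u a b x y"
    by blast
  have "(p' a' b' x' y' + t * box_map nA nB mX mY K w a' b' x' y') / (1 + t) = box_map nA nB mX mY K u a' b' x' y'"
    if "a' < nA'" "b' < nB'" "x' < mX'" "y' < mY'" for a' b' x' y'
  proof -
    have "p' a' b' x' y' + t * box_map nA nB mX mY K w a' b' x' y'
        = box_map nA nB mX mY K (\<lambda>a b x y. p a b x y + t * w a b x y) a' b' x' y'"
      using p' that by (simp add: box_map_affine)
    also have "\<dots> = box_map nA nB mX mY K (\<lambda>a b x y. (1 + t) * u a b x y) a' b' x' y'"
      using mix t by (intro box_map_cong) (simp add: field_simps)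
    also have "\<dots> = (1 + t) * box_map nA nB mX mY K u a' b' x' y'"
      unfolding box_map_def by (simp add: sum_distrib_left algebra_simps)
    finally show ?thesis using t by simp
  qed
  then show "t \<in> {t. t \<ge> 0 \<and> (\<exists>w u. S' w \<and> S' u \<and>
      (\<forall>a<nA'. \<forall>b<nB'. \<forall>x<mX'. \<forall>y<mY'. (p' a b x y + t * w a b x y) / (1 + t) = u a b x y))}"
    using t S[OF w] S[OF u] by blast
qed

lemma op_robustness_cut_tensor_le:
  assumes S: "\<And>W. S W \<Longrightarrow> S' (cut_tensor dA dB dC dD W \<tau>)"
    and S_carrier: "\<And>W. S W \<Longrightarrow> W \<in> carrier_mat (dA * dB) (dA * dB)"
    and X: "X \<in> carrier_mat (dA * dB) (dA * dB)"
  shows "op_robustness S' (cut_tensor dA dB dC dD X \<tau>) \<le> op_robustness S X"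
  unfolding op_robustness_def
proof (rule Inf_superset_mono, rule image_mono, rule subsetI)
  fix t
  assume "t \<in> {t. t \<ge> 0 \<and> (\<exists>W. S W \<and> S (complex_of_real (1 / (1 + t)) \<cdot>\<^sub>m (X + complex_of_real t \<cdot>\<^sub>m W)))}"
  then obtain W where t: "t \<ge> 0" and W: "S W"
    and mix: "S (complex_of_real (1 / (1 + t)) \<cdot>\<^sub>m (X + complex_of_real t \<cdot>\<^sub>m W))"
    by blast
  have "S' (complex_of_real (1 / (1 + t)) \<cdot>\<^sub>m
      (cut_tensor dA dB dC dD X \<tau> + complex_of_real t \<cdot>\<^sub>m cut_tensor dA dB dC dD W \<tau>))"
    using S[OF mix] cut_tensor_affine[OF X S_carrier[OF W]] by simp
  then show "t \<in> {t. t \<ge> 0 \<and> (\<exists>W. S' W \<and> S' (complex_of_real (1 / (1 + t)) \<cdot>\<^sub>m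
      (cut_tensor dA dB dC dD X \<tau> + complex_of_real t \<cdot>\<^sub>m W)))}"
    using t S[OF W] by blast
qed

lemma Inf_pseudo_state_cut_tensor_le:
  fixes R :: "nat \<Rightarrow> nat \<Rightarrow> complex mat \<Rightarrow> ereal"
  assumes produces: "\<And>dA dB X. pseudo_state (dA * dB) X \<Longrightarrow> produces nA nB mX mY dA dB X p
      \<Longrightarrow> produces nA' nB' mX' mY' (dA * dC) (dB * dD) (cut_tensor dA dB dC dD X \<tau>) p'"
    and \<tau>: "density_op (dC * dD) \<tau>"
    and R: "\<And>dA dB X. X \<in> carrier_mat (dA * dB) (dA * dB)
      \<Longrightarrow> R (dA * dC) (dB * dD) (cut_tensor dA dB dC dD X \<tau>) \<le> R dA dB X"
  shows "Inf {R dA dB X | dA dB X. pseudo_state (dA * dB) X \<and> produces nA' nB' mX' mY' dA dB X p'}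
    \<le> Inf {R dA dB X | dA dB X. pseudo_state (dA * dB) X \<and> produces nA nB mX mY dA dB X p}"
proof (rule Inf_mono)
  fix r
  assume "r \<in> {R dA dB X | dA dB X. pseudo_state (dA * dB) X \<and> produces nA nB mX mY dA dB X p}"
  then obtain dA dB X where r: "r = R dA dB X" and X: "pseudo_state (dA * dB) X"
    and p: "produces nA nB mX mY dA dB X p"
    by blast
  have "pseudo_state (dA * dC * (dB * dD)) (cut_tensor dA dB dC dD X \<tau>)"
    by (rule pseudo_state_cut_tensor[OF X \<tau>])
  moreover have "X \<in> carrier_mat (dA * dB) (dA * dB)"
    using X by (simp add: pseudo_state_def hermitian_op_def)
  ultimately show "\<exists>r'\<in>{R dA dB X | dA dB X. pseudo_state (dA * dB) X \<and> produces nA' nB' mX' mY' dA dB X p'}. r' \<le> r"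
    unfolding r using produces[OF X p] R by blast
qed

section \<open>Wiring a box with a shared state\<close>

definition wiring_kernel :: "nat \<Rightarrow> nat \<Rightarrow> complex mat
    \<Rightarrow> (nat \<Rightarrow> nat \<Rightarrow> complex mat \<Rightarrow> complex mat) \<Rightarrow> (nat \<Rightarrow> nat \<Rightarrow> complex mat \<Rightarrow> complex mat)
    \<Rightarrow> (nat \<Rightarrow> nat \<Rightarrow> nat \<Rightarrow> nat \<Rightarrow> complex mat) \<Rightarrow> (nat \<Rightarrow> nat \<Rightarrow> nat \<Rightarrow> nat \<Rightarrow> complex mat)
    \<Rightarrow> nat \<Rightarrow> nat \<Rightarrow> nat \<Rightarrow> nat \<Rightarrow> nat \<Rightarrow> nat \<Rightarrow> nat \<Rightarrow> nat \<Rightarrow> real" where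
  "wiring_kernel dC dD \<tau> \<Lambda> \<Gamma> M2 N2 a' b' x' y' a b x y =
    Re (mtrace (kron (M2 a' a x x') (N2 b' b y y') * map_tensor dC dD dC dD (\<Lambda> x x') (\<Gamma> y y') \<tau>))"

locale wiring =
  fixes nA nB mX mY nA' nB' mX' mY' dC dD :: nat
    and \<tau> :: "complex mat"
    and \<Lambda> \<Gamma> :: "nat \<Rightarrow> nat \<Rightarrow> complex mat \<Rightarrow> complex mat"
    and M2 N2 :: "nat \<Rightarrow> nat \<Rightarrow> nat \<Rightarrow> nat \<Rightarrow> complex mat"
  assumes tau: "density_op (dC * dD) \<tau>"
    and instA: "\<forall>x'<mX'. instrument dC mX (\<lambda>x. \<Lambda> x x')"
    and instB: "\<forall>y'<mY'. instrument dD mY (\<lambda>y. \<Gamma> y y')"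
    and povmA: "\<forall>a<nA. \<forall>x<mX. \<forall>x'<mX'. povm dC nA' (\<lambda>a'. M2 a' a x x')"
    and povmB: "\<forall>b<nB. \<forall>y<mY. \<forall>y'<mY'. povm dD nB' (\<lambda>b'. N2 b' b y y')"
begin

abbreviation wired :: "(nat \<Rightarrow> nat \<Rightarrow> nat \<Rightarrow> nat \<Rightarrow> real) \<Rightarrow> nat \<Rightarrow> nat \<Rightarrow> nat \<Rightarrow> nat \<Rightarrow> real" where
  "wired \<equiv> box_map nA nB mX mY (wiring_kernel dC dD \<tau> \<Lambda> \<Gamma> M2 N2)"

lemma tau_psd: "psd_op (dC * dD) \<tau>"
  using tau by (simp add: density_op_def)

lemma tau_carrier: "\<tau> \<in> carrier_mat (dC * dD) (dC * dD)"
  using tau_psd by (rule psd_op_carrier)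

lemma instA_cp: "x' < mX' \<Longrightarrow> x < mX \<Longrightarrow> cp_map dC dC (\<Lambda> x x')"
  using instA by (simp add: instrument_def)

lemma instB_cp: "y' < mY' \<Longrightarrow> y < mY \<Longrightarrow> cp_map dD dD (\<Gamma> y y')"
  using instB by (simp add: instrument_def)

lemma povmA_psd: "a' < nA' \<Longrightarrow> a < nA \<Longrightarrow> x < mX \<Longrightarrow> x' < mX' \<Longrightarrow> psd_op dC (M2 a' a x x')"
  using povmA by (simp add: povm_def)

lemma povmB_psd: "b' < nB' \<Longrightarrow> b < nB \<Longrightarrow> y < mY \<Longrightarrow> y' < mY' \<Longrightarrow> psd_op dD (N2 b' b y y')"
  using povmB by (simp add: povm_def)

lemma wiring_kernel_dual:
  assumes "a' < nA'" "b' < nB'" "x' < mX'" "y' < mY'" "a < nA" "b < nB" "x < mX" "y < mY"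
  shows "complex_of_real (wiring_kernel dC dD \<tau> \<Lambda> \<Gamma> M2 N2 a' b' x' y' a b x y)
    = mtrace (kron (dual_map dC (\<Lambda> x x') (M2 a' a x x')) (dual_map dD (\<Gamma> y y') (N2 b' b y y')) * \<tau>)"
proof -
  have cp: "cp_map dC dC (\<Lambda> x x')" "cp_map dD dD (\<Gamma> y y')"
    using assms instA_cp instB_cp by auto
  have psd: "psd_op dC (M2 a' a x x')" "psd_op dD (N2 b' b y y')"
    using assms povmA_psd povmB_psd by auto
  have "mtrace (kron (M2 a' a x x') (N2 b' b y y') * map_tensor dC dD dC dD (\<Lambda> x x') (\<Gamma> y y') \<tau>)
      = mtrace (kron (dual_map dC (\<Lambda> x x') (M2 a' a x x')) (dual_map dD (\<Gamma> y y') (N2 b' b y y')) * \<tau>)"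
    using cp psd tau_carrier by (intro mtrace_kron_map_tensor) (auto simp: cp_map_def psd_op_carrier)
  moreover have "0 \<le> mtrace (kron (dual_map dC (\<Lambda> x x') (M2 a' a x x')) (dual_map dD (\<Gamma> y y') (N2 b' b y y')) * \<tau>)"
    using cp psd tau_psd by (rule mtrace_kron_dual_map_nonneg)
  ultimately show ?thesis
    unfolding wiring_kernel_def by (simp add: complex_nonneg_of_real_Re)
qed

lemma produces_wired:
  assumes p: "produces nA nB mX mY dA dB X p" and X: "X \<in> carrier_mat (dA * dB) (dA * dB)"
  shows "produces nA' nB' mX' mY' (dA * dC) (dB * dD) (cut_tensor dA dB dC dD X \<tau>) (wired p)"
proof -
  obtain M N where M: "\<forall>x<mX. povm dA nA (M x)" and N: "\<forall>y<mY. povm dB nB (N y)"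
    and MN: "\<forall>a<nA. \<forall>b<nB. \<forall>x<mX. \<forall>y<mY. complex_of_real (p a b x y) = mtrace (kron (M x a) (N y b) * X)"
    using p unfolding produces_def by blast
  define M' where "M' x' a' = wired_povm dA dC nA mX M (\<lambda>x. \<Lambda> x x') (\<lambda>a x. M2 a' a x x')" for x' a'
  define N' where "N' y' b' = wired_povm dB dD nB mY N (\<lambda>y. \<Gamma> y y') (\<lambda>b y. N2 b' b y y')" for y' b'
  have "\<forall>x'<mX'. povm (dA * dC) nA' (M' x')"
    unfolding M'_def using M instA povmA by (auto intro!: wired_povm_povm)
  moreover have "\<forall>y'<mY'. povm (dB * dD) nB' (N' y')"
    unfolding N'_def using N instB povmB by (auto intro!: wired_povm_povm)
  moreover have "complex_of_real (wired p a' b' x' y') = mtrace (kron (M' x' a') (N' y' b') * cut_tensor dA dB dC dD X \<tau>)"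
    if "a' < nA'" "b' < nB'" "x' < mX'" "y' < mY'" for a' b' x' y'
  proof -
    have "mtrace (kron (M' x' a') (N' y' b') * cut_tensor dA dB dC dD X \<tau>)
        = (\<Sum>a<nA. \<Sum>b<nB. \<Sum>x<mX. \<Sum>y<mY. mtrace (kron (M x a) (N y b) * X)
            * mtrace (kron (dual_map dC (\<Lambda> x x') (M2 a' a x x')) (dual_map dD (\<Gamma> y y') (N2 b' b y y')) * \<tau>))"
      unfolding M'_def N'_def using M N X tau_carrier
      by (intro mtrace_wired_povm_cut_tensor) (auto simp: povm_def psd_op_carrier)
    also have "\<dots> = (\<Sum>a<nA. \<Sum>b<nB. \<Sum>x<mX. \<Sum>y<mY.
        complex_of_real (wiring_kernel dC dD \<tau> \<Lambda> \<Gamma> M2 N2 a' b' x' y' a b x y * p a b x y))"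
      using MN that by (intro sum.cong refl) (simp add: wiring_kernel_dual mult.commute)
    finally show ?thesis by (simp add: box_map_def)
  qed
  ultimately show ?thesis unfolding produces_def by blast
qed

lemma wiring_kernel_separable:
  assumes \<tau>_eq: "\<tau> = mat (dC * dD) (dC * dD) (\<lambda>(r,c). \<Sum>j<n. complex_of_real (q j) * kron (\<sigma>C j) (\<sigma>D j) $$ (r,c))"
    and \<sigma>: "\<And>j. j < n \<Longrightarrow> psd_op dC (\<sigma>C j) \<and> psd_op dD (\<sigma>D j)"
    and "a' < nA'" "b' < nB'" "x' < mX'" "y' < mY'" "a < nA" "b < nB" "x < mX" "y < mY"
  shows "wiring_kernel dC dD \<tau> \<Lambda> \<Gamma> M2 N2 a' b' x' y' a b x y = (\<Sum>j<n. q j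
    * (Re (mtrace (M2 a' a x x' * \<Lambda> x x' (\<sigma>C j))) * Re (mtrace (N2 b' b y y' * \<Gamma> y y' (\<sigma>D j)))))"
proof -
  have cp: "cp_map dC dC (\<Lambda> x x')" "cp_map dD dD (\<Gamma> y y')"
    using assms instA_cp instB_cp by auto
  have psd: "psd_op dC (M2 a' a x x')" "psd_op dD (N2 b' b y y')"
    using assms povmA_psd povmB_psd by auto
  have "complex_of_real (wiring_kernel dC dD \<tau> \<Lambda> \<Gamma> M2 N2 a' b' x' y' a b x y)
      = mtrace (kron (dual_map dC (\<Lambda> x x') (M2 a' a x x')) (dual_map dD (\<Gamma> y y') (N2 b' b y y')) * \<tau>)"
    using assms(3-) by (rule wiring_kernel_dual)
  also have "\<dots> = (\<Sum>j<n. complex_of_real (q j) * (mtrace (M2 a' a x x' * \<Lambda> x x' (\<sigma>C j))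
      * mtrace (N2 b' b y y' * \<Gamma> y y' (\<sigma>D j))))"
    unfolding \<tau>_eq using cp psd \<sigma>
    by (intro mtrace_kron_dual_map_separable) (auto simp: cp_map_def psd_op_carrier)
  also have "\<dots> = complex_of_real (\<Sum>j<n. q j
      * (Re (mtrace (M2 a' a x x' * \<Lambda> x x' (\<sigma>C j))) * Re (mtrace (N2 b' b y y' * \<Gamma> y y' (\<sigma>D j)))))"
    unfolding of_real_sum using cp psd \<sigma>
    by (intro sum.cong refl) (simp add: complex_nonneg_of_real_Re cp_map_psd mtrace_mult_psd_nonneg)
  finally show ?thesis by (simp only: of_real_eq_iff)
qed

lemma local_box_wired:
  assumes w: "local_box nA nB mX mY w" and sep: "separable dC dD \<tau>"
  shows "local_box nA' nB' mX' mY' (wired w)"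
proof -
  obtain n1 :: nat and q1 :: "nat \<Rightarrow> real" and pA pB :: "nat \<Rightarrow> nat \<Rightarrow> nat \<Rightarrow> real" where
    q1: "\<forall>i<n1. q1 i \<ge> 0" "(\<Sum>i<n1. q1 i) = 1"
    and pA: "\<forall>i<n1. \<forall>x<mX. (\<forall>a<nA. pA i a x \<ge> 0) \<and> (\<Sum>a<nA. pA i a x) = 1"
    and pB: "\<forall>i<n1. \<forall>y<mY. (\<forall>b<nB. pB i b y \<ge> 0) \<and> (\<Sum>b<nB. pB i b y) = 1"
    and w_eq: "\<forall>a<nA. \<forall>b<nB. \<forall>x<mX. \<forall>y<mY. w a b x y = (\<Sum>i<n1. q1 i * pA i a x * pB i b y)"
    using w unfolding local_box_def by blast
  obtain n2 :: nat and q2 :: "nat \<Rightarrow> real" and \<sigma>C \<sigma>D where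
    q2: "\<forall>j<n2. q2 j \<ge> 0 \<and> density_op dC (\<sigma>C j) \<and> density_op dD (\<sigma>D j)" "(\<Sum>j<n2. q2 j) = 1"
    and \<tau>_eq: "\<tau> = mat (dC * dD) (dC * dD) (\<lambda>(r,c). \<Sum>j<n2. complex_of_real (q2 j) * kron (\<sigma>C j) (\<sigma>D j) $$ (r,c))"
    using sep unfolding separable_def by blast
  define \<alpha> where "\<alpha> j a' a x x' = Re (mtrace (M2 a' a x x' * \<Lambda> x x' (\<sigma>C j)))" for j a' a x x'
  define \<beta> where "\<beta> j b' b y y' = Re (mtrace (N2 b' b y y' * \<Gamma> y y' (\<sigma>D j)))" for j b' b y y'
  define PA where "PA i j a' x' = (\<Sum>a<nA. \<Sum>x<mX. \<alpha> j a' a x x' * pA i a x)" for i j a' x'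
  define PB where "PB i j b' y' = (\<Sum>b<nB. \<Sum>y<mY. \<beta> j b' b y y' * pB i b y)" for i j b' y'
  have "\<forall>i<n1. \<forall>j<n2. \<forall>x'<mX'. (\<forall>a'<nA'. 0 \<le> PA i j a' x') \<and> (\<Sum>a'<nA'. PA i j a' x') = 1"
    unfolding PA_def \<alpha>_def using instA q2(1) povmA pA
    by (intro allI impI instrument_response_distribution[where d = dC]) simp_all
  moreover have "\<forall>i<n1. \<forall>j<n2. \<forall>y'<mY'. (\<forall>b'<nB'. 0 \<le> PB i j b' y') \<and> (\<Sum>b'<nB'. PB i j b' y') = 1"
    unfolding PB_def \<beta>_def using instB q2(1) povmB pB
    by (intro allI impI instrument_response_distribution[where d = dD]) simp_all
  moreover have "wired w a' b' x' y' = (\<Sum>i<n1. \<Sum>j<n2. (q1 i * q2 j) * PA i j a' x' * PB i j b' y')"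
    if "a' < nA'" "b' < nB'" "x' < mX'" "y' < mY'" for a' b' x' y'
  proof -
    have "wired w a' b' x' y' = (\<Sum>a<nA. \<Sum>b<nB. \<Sum>x<mX. \<Sum>y<mY.
        (\<Sum>j<n2. q2 j * (\<alpha> j a' a x x' * \<beta> j b' b y y')) * (\<Sum>i<n1. q1 i * pA i a x * pB i b y))"
      unfolding box_map_def \<alpha>_def \<beta>_def using that w_eq q2(1)
      by (intro sum.cong refl) (simp add: wiring_kernel_separable[OF \<tau>_eq] density_op_def)
    then show ?thesis
      unfolding PA_def PB_def by (simp only: sum_mixture_product)
  qed
  ultimately show ?thesis
    using q1 q2 by (intro local_box_double_sum[where Q = "\<lambda>i j. q1 i * q2 j"])
      (auto simp: sum_product[symmetric])
qed

lemma quantum_box_wired: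
  assumes "quantum_box nA nB mX mY w"
  shows "quantum_box nA' nB' mX' mY' (wired w)"
proof -
  obtain dA dB \<rho> where \<rho>: "density_op (dA * dB) \<rho>" and w: "produces nA nB mX mY dA dB \<rho> w"
    using assms unfolding quantum_box_def by blast
  have "density_op (dA * dC * (dB * dD)) (cut_tensor dA dB dC dD \<rho> \<tau>)"
    by (rule density_op_cut_tensor[OF \<rho> tau])
  moreover have "produces nA' nB' mX' mY' (dA * dC) (dB * dD) (cut_tensor dA dB dC dD \<rho> \<tau>) (wired w)"
    using \<rho> w by (intro produces_wired) (simp_all add: density_op_def psd_op_carrier)
  ultimately show ?thesis unfolding quantum_box_def by blast
qed

end

theorem mainTheorem8:
  fixes nA nB mX mY nA' nB' mX' mY' dC dD :: nat
    and p p' :: "nat \<Rightarrow> nat \<Rightarrow> nat \<Rightarrow> nat \<Rightarrow> real"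
    and \<tau> :: "complex mat"
    and \<Lambda> \<Gamma> :: "nat \<Rightarrow> nat \<Rightarrow> complex mat \<Rightarrow> complex mat"
    and M2 N2 :: "nat \<Rightarrow> nat \<Rightarrow> nat \<Rightarrow> nat \<Rightarrow> complex mat"
  assumes ns: "no_signalling nA nB mX mY p"
    and tau: "density_op (dC*dD) \<tau>"
    and instA: "\<forall>x'<mX'. instrument dC mX (\<lambda>x. \<Lambda> x x')"
    and instB: "\<forall>y'<mY'. instrument dD mY (\<lambda>y. \<Gamma> y y')"
    and povmA: "\<forall>a<nA. \<forall>x<mX. \<forall>x'<mX'. povm dC nA' (\<lambda>a'. M2 a' a x x')"
    and povmB: "\<forall>b<nB. \<forall>y<mY. \<forall>y'<mY'. povm dD nB' (\<lambda>b'. N2 b' b y y')"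
    and p'_def: "\<forall>a'<nA'. \<forall>b'<nB'. \<forall>x'<mX'. \<forall>y'<mY'.
       p' a' b' x' y' = (\<Sum>a<nA. \<Sum>b<nB. \<Sum>x<mX. \<Sum>y<mY.
          Re (mtrace (kron (M2 a' a x x') (N2 b' b y y') *
                      map_tensor dC dD dC dD (\<Lambda> x x') (\<Gamma> y y') \<tau>)) * p a b x y)"
  shows "(separable dC dD \<tau> \<longrightarrow>
            r_L nA' nB' mX' mY' p' \<le> r_L nA nB mX mY p \<and>
            r_S_box nA' nB' mX' mY' p' \<le> r_S_box nA nB mX mY p)
       \<and> r_Q nA' nB' mX' mY' p' \<le> r_Q nA nB mX mY p
       \<and> r_D_box nA' nB' mX' mY' p' \<le> r_D_box nA nB mX mY p
       \<and> (\<forall>dA dB Op. pseudo_state (dA*dB) Op \<and> produces nA nB mX mY dA dB Op p \<longrightarrow>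
            produces nA' nB' mX' mY' (dA*dC) (dB*dD) (cut_tensor dA dB dC dD Op \<tau>) p')"
proof -
  interpret wiring nA nB mX mY nA' nB' mX' mY' dC dD \<tau> \<Lambda> \<Gamma> M2 N2
    using tau instA instB povmA povmB by unfold_locales
  have p': "\<forall>a'<nA'. \<forall>b'<nB'. \<forall>x'<mX'. \<forall>y'<mY'. p' a' b' x' y' = wired p a' b' x' y'"
    using p'_def by (simp add: box_map_def wiring_kernel_def)
  have produces_p': "produces nA' nB' mX' mY' (dA * dC) (dB * dD) (cut_tensor dA dB dC dD X \<tau>) p'"
    if "pseudo_state (dA * dB) X" "produces nA nB mX mY dA dB X p" for dA dB X
    using produces_wired[OF that(2)] that(1) p'
    by (auto simp: produces_def pseudo_state_def hermitian_op_def)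
  have "r_L nA' nB' mX' mY' p' \<le> r_L nA nB mX mY p" if "separable dC dD \<tau>"
    unfolding r_L_def using local_box_wired[OF _ that] p' by (rule box_robustness_box_map_le)
  moreover have "r_S_box nA' nB' mX' mY' p' \<le> r_S_box nA nB mX mY p" if "separable dC dD \<tau>"
    unfolding r_S_box_def r_S_op_def using produces_p' tau
    by (rule Inf_pseudo_state_cut_tensor_le)
      (use that in \<open>auto intro: op_robustness_cut_tensor_le separable_cut_tensor separable_carrier\<close>)
  moreover have "r_Q nA' nB' mX' mY' p' \<le> r_Q nA nB mX mY p"
    unfolding r_Q_def using quantum_box_wired p' by (rule box_robustness_box_map_le)
  moreover have "r_D_box nA' nB' mX' mY' p' \<le> r_D_box nA nB mX mY p"
    unfolding r_D_box_def r_D_op_def using produces_p' tau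
    by (rule Inf_pseudo_state_cut_tensor_le)
      (auto intro!: op_robustness_cut_tensor_le intro: density_op_cut_tensor[OF _ tau] density_op_carrier)
  ultimately show ?thesis using produces_p' by blast
qed

end
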